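(* Let $(\psi_{s,t})$ be an evolution family of order $d\in[1,+\infty]$ and let $a\in AC^d([0,+\infty),\mathbb D)$, $b\in AC^d([0,+\infty),\partial\mathbb D)$. For $t\ge0$ and $z\in\mathbb D$ let $h_t(z):=\frac{b(t)z+a(t)}{1+b(t)\overline{a(t)}z}$. Define $\varphi_{s,t}:=h_t\circ\psi_{s,t}\circ h_s^{-1}$ and $\tilde\varphi_{s,t}:=h_t^{-1}\circ\psi_{s,t}\circ h_s$ for $0\le s\le t$. Then $(\varphi_{s,t})$ and $(\tilde\varphi_{s,t})$ are evolution families of order $d$.
   Context: $\mathbb D$ is the open unit disk. For $d\in[1,+\infty]$, an evolution family of order $d$ is a family $(\varphi_{s,t})_{0\le s\le t<+\infty}$ of holomorphic self-maps of $\mathbb D$ with $\varphi_{s,s}=\mathrm{id}_{\mathbb D}$, $\varphi_{s,t}=\varphi_{u,t}\circ\varphi_{s,u}$ for $0\le s\le u\le t$, and such that for every $z\in\mathbb D$, $T>0$ there is a non-negative $k_{z,T}\in L^d([0,T])$ with $|\varphi_{s,u}(z)-\varphi_{s,t}(z)|\le\int_u^tk_{z,T}$ for all $0\le s\le u\le t\le T$. $AC^d(X,Y)$ denotes the class of locally absolutely continuous functions $f:X\to Y$ with $f'\in L^d_{\mathrm{loc}}(X)$. *)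

theory Defs
  imports "HOL-Analysis.Analysis"
begin

abbreviation unit_disk :: "complex set" where
  "unit_disk \<equiv> ball 0 1"

definition Lp_on :: "ereal \<Rightarrow> real set \<Rightarrow> (real \<Rightarrow> 'b::{banach,second_countable_topology}) \<Rightarrow> bool" where
  "Lp_on d S f \<longleftrightarrow>
     f \<in> borel_measurable (lebesgue_on S) \<and>
     (if d = \<infinity> then (\<exists>C. AE x in lebesgue_on S. norm (f x) \<le> C)
      else set_integrable lebesgue S (\<lambda>x. norm (f x) powr real_of_ereal d))"

definition Lp_loc :: "ereal \<Rightarrow> (real \<Rightarrow> 'b::{banach,second_countable_topology}) \<Rightarrow> bool" where
  "Lp_loc d f \<longleftrightarrow> (\<forall>T>0. Lp_on d {0..T} f)"

definition abs_cont_on :: "real set \<Rightarrow> (real \<Rightarrow> 'b::real_normed_vector) \<Rightarrow> bool" where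
  "abs_cont_on S f \<longleftrightarrow>
     (\<forall>\<epsilon>>0. \<exists>\<delta>>0. \<forall>(n::nat) (u::nat \<Rightarrow> real) (v::nat \<Rightarrow> real).
        (\<forall>i<n. u i \<in> S \<and> v i \<in> S \<and> u i \<le> v i) \<and>
        (\<forall>i<n. \<forall>j<n. i \<noteq> j \<longrightarrow> v i \<le> u j \<or> v j \<le> u i) \<and>
        (\<Sum>i<n. v i - u i) < \<delta>
        \<longrightarrow> (\<Sum>i<n. norm (f (v i) - f (u i))) < \<epsilon>)"

definition ACd :: "ereal \<Rightarrow> complex set \<Rightarrow> (real \<Rightarrow> complex) \<Rightarrow> bool" where
  "ACd d Y f \<longleftrightarrow>
     (\<forall>t\<ge>0. f t \<in> Y) \<and>
     (\<forall>T>0. abs_cont_on {0..T} f) \<and>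
     (\<exists>g. Lp_loc d g \<and>
          (AE t in lebesgue_on {0..}. (f has_vector_derivative g t) (at t within {0..})))"

definition evolution_family :: "ereal \<Rightarrow> (real \<Rightarrow> real \<Rightarrow> complex \<Rightarrow> complex) \<Rightarrow> bool" where
  "evolution_family d \<phi> \<longleftrightarrow>
     (\<forall>s t. 0 \<le> s \<and> s \<le> t \<longrightarrow> \<phi> s t holomorphic_on unit_disk \<and> \<phi> s t ` unit_disk \<subseteq> unit_disk) \<and>
     (\<forall>s\<ge>0. \<forall>z\<in>unit_disk. \<phi> s s z = z) \<and>
     (\<forall>s u t. 0 \<le> s \<and> s \<le> u \<and> u \<le> t \<longrightarrow> (\<forall>z\<in>unit_disk. \<phi> s t z = \<phi> u t (\<phi> s u z))) \<and>
     (\<forall>z\<in>unit_disk. \<forall>T>0. \<exists>k::real \<Rightarrow> real. (\<forall>x. 0 \<le> k x) \<and> Lp_on d {0..T} k \<and>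
        (\<forall>s u t. 0 \<le> s \<and> s \<le> u \<and> u \<le> t \<and> t \<le> T \<longrightarrow>
           norm (\<phi> s u z - \<phi> s t z) \<le> integral {u..t} k))"

end

theory Submission
  imports Defs "HOL-Complex_Analysis.Complex_Analysis"
begin

definition disk_moebius :: "complex \<Rightarrow> complex \<Rightarrow> complex \<Rightarrow> complex" where
  "disk_moebius a b z = (b * z + a) / (1 + b * cnj a * z)"

text \<open>The norm of \<open>disk_moebius a b z\<close> is at most \<open>radius_add \<bar>a\<bar> \<bar>z\<bar>\<close>; this is the
  addition of radii in the pseudo-hyperbolic metric of the disk.\<close>
definition radius_add :: "real \<Rightarrow> real \<Rightarrow> real" where
  "radius_add p r = (p + r) / (1 + p * r)"

lemma radius_add_commute: "radius_add p r = radius_add r p"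
  by (simp add: radius_add_def add.commute mult.commute)

lemma radius_add_mono_right:
  fixes p r r' :: real
  assumes "0 \<le> p" "p \<le> 1" "0 \<le> r" "r \<le> r'"
  shows "radius_add p r \<le> radius_add p r'"
proof -
  have "0 < 1 + p * r" "0 < 1 + p * r'"
    using assms by (simp_all add: add_pos_nonneg)
  moreover have "(p + r') * (1 + p * r) - (p + r) * (1 + p * r') = (r' - r) * (1 - p * p)"
    by (simp add: algebra_simps)
  moreover have "0 \<le> (r' - r) * (1 - p * p)"
    using assms by (simp add: mult_le_one)
  ultimately show ?thesis
    by (simp add: radius_add_def divide_simps)
qed

lemma radius_add_mono:
  fixes p p' r r' :: real
  assumes "0 \<le> p" "p \<le> p'" "p' \<le> 1" "0 \<le> r" "r \<le> r'" "r' \<le> 1"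
  shows "radius_add p r \<le> radius_add p' r'"
proof -
  have "radius_add p r \<le> radius_add p r'"
    using assms by (intro radius_add_mono_right) auto
  also have "\<dots> = radius_add r' p" by (rule radius_add_commute)
  also have "\<dots> \<le> radius_add r' p'"
    using assms by (intro radius_add_mono_right) auto
  finally show ?thesis by (simp add: radius_add_commute)
qed

lemma radius_add_bounds:
  fixes p r :: real
  assumes "0 \<le> p" "p < 1" "0 \<le> r" "r < 1"
  shows "0 \<le> radius_add p r" "radius_add p r < 1"
proof -
  have "0 < (1 - p) * (1 - r)" using assms by simp
  then have "p + r < 1 + p * r" by (simp add: algebra_simps)
  then show "0 \<le> radius_add p r" "radius_add p r < 1"
    using assms by (simp_all add: radius_add_def)
qed

lemma one_minus_radius_add_squared:
  fixes p r :: real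
  assumes "1 + p * r \<noteq> 0"
  shows "1 - (radius_add p r)\<^sup>2 = (1 - p\<^sup>2) * (1 - r\<^sup>2) / (1 + p * r)\<^sup>2"
proof -
  have "(1 + p * r)\<^sup>2 - (p + r)\<^sup>2 = (1 - p\<^sup>2) * (1 - r\<^sup>2)" by algebra
  then show ?thesis
    using assms by (simp add: radius_add_def field_simps)
qed

lemma one_minus_mult_cnj: "1 - a * cnj a = complex_of_real (1 - (cmod a)\<^sup>2)"
  by (metis complex_norm_square of_real_1 of_real_diff)

lemma norm_moebius_denom_ge:
  assumes "cmod b = 1" "cmod z \<le> 1"
  shows "1 - cmod a \<le> cmod (1 + b * cnj a * z)"
proof -
  have "cmod (b * cnj a * z) \<le> cmod a"
    using assms by (simp add: norm_mult mult_left_le)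
  moreover have "cmod (1::complex) - cmod (b * cnj a * z) \<le> cmod (1 + b * cnj a * z)"
    by (metis norm_diff_ineq norm_minus_cancel diff_minus_eq_add)
  ultimately show ?thesis by simp
qed

lemma norm_moebius_denom_le:
  assumes "cmod b = 1"
  shows "cmod (1 + b * cnj a * z) \<le> 1 + cmod a * cmod z"
  using norm_triangle_ineq[of 1 "b * cnj a * z"] assms by (simp add: norm_mult)

lemma moebius_denom_nonzero:
  assumes "cmod a < 1" "cmod b = 1" "cmod z \<le> 1"
  shows "1 + b * cnj a * z \<noteq> 0"
  using norm_moebius_denom_ge[OF assms(2,3), of a] assms(1) by auto

lemma disk_moebius_0 [simp]: "disk_moebius a b 0 = a"
  by (simp add: disk_moebius_def)

lemma one_minus_norm_disk_moebius_squared: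
  assumes "cmod a < 1" "cmod b = 1" "cmod z < 1"
  shows "1 - (cmod (disk_moebius a b z))\<^sup>2
           = (1 - (cmod a)\<^sup>2) * (1 - (cmod z)\<^sup>2) / (cmod (1 + b * cnj a * z))\<^sup>2"
proof -
  have bb: "b * cnj b = 1" using assms(2) complex_norm_square[of b] by simp
  have na: "complex_of_real ((cmod a)\<^sup>2) = a * cnj a"
    and nz: "complex_of_real ((cmod z)\<^sup>2) = z * cnj z"
    by (rule complex_norm_square)+
  have "complex_of_real ((cmod (1 + b * cnj a * z))\<^sup>2 - (cmod (b * z + a))\<^sup>2)
      = (1 + b * cnj a * z) * cnj (1 + b * cnj a * z) - (b * z + a) * cnj (b * z + a)"
    by (simp only: of_real_diff complex_norm_square)
  also have "\<dots> = 1 + a * cnj a * z * cnj z * (b * cnj b) - z * cnj z * (b * cnj b) - a * cnj a"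
    by (simp add: algebra_simps)
  also have "\<dots> = (1 - complex_of_real ((cmod a)\<^sup>2)) * (1 - complex_of_real ((cmod z)\<^sup>2))"
    unfolding na nz bb by (simp add: algebra_simps)
  also have "\<dots> = complex_of_real ((1 - (cmod a)\<^sup>2) * (1 - (cmod z)\<^sup>2))"
    by simp
  finally have "(cmod (1 + b * cnj a * z))\<^sup>2 - (cmod (b * z + a))\<^sup>2 = (1 - (cmod a)\<^sup>2) * (1 - (cmod z)\<^sup>2)"
    using of_real_eq_iff by blast
  moreover have "cmod (1 + b * cnj a * z) \<noteq> 0"
    using moebius_denom_nonzero[OF assms(1,2), of z] assms(3) by simp
  moreover have "(cmod (disk_moebius a b z))\<^sup>2 = (cmod (b * z + a))\<^sup>2 / (cmod (1 + b * cnj a * z))\<^sup>2"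
    by (simp add: disk_moebius_def norm_divide power_divide)
  moreover have "1 - (cmod (b * z + a))\<^sup>2 / (cmod (1 + b * cnj a * z))\<^sup>2
      = ((cmod (1 + b * cnj a * z))\<^sup>2 - (cmod (b * z + a))\<^sup>2) / (cmod (1 + b * cnj a * z))\<^sup>2"
    using calculation(2) by (simp add: field_simps)
  ultimately show ?thesis by simp
qed

lemma norm_disk_moebius_le:
  assumes "cmod a < 1" "cmod b = 1" "cmod z < 1"
  shows "cmod (disk_moebius a b z) \<le> radius_add (cmod a) (cmod z)"
proof -
  let ?Q = "cmod (1 + b * cnj a * z)" and ?D = "1 + cmod a * cmod z"
  have "0 < ?D" by (simp add: add_pos_nonneg)
  moreover have "0 < ?Q" using moebius_denom_nonzero[OF assms(1,2), of z] assms by simp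
  moreover have "?Q \<le> ?D" by (rule norm_moebius_denom_le[OF assms(2)])
  moreover have "0 \<le> (1 - (cmod a)\<^sup>2) * (1 - (cmod z)\<^sup>2)"
    using assms by (simp add: abs_square_le_1 less_imp_le)
  ultimately have "(1 - (cmod a)\<^sup>2) * (1 - (cmod z)\<^sup>2) / ?D\<^sup>2
                 \<le> (1 - (cmod a)\<^sup>2) * (1 - (cmod z)\<^sup>2) / ?Q\<^sup>2"
    by (intro divide_left_mono mult_pos_pos zero_less_power) (auto intro: power_mono simp: add_pos_nonneg)
  then have "(cmod (disk_moebius a b z))\<^sup>2 \<le> (radius_add (cmod a) (cmod z))\<^sup>2"
    using one_minus_norm_disk_moebius_squared[OF assms]
      one_minus_radius_add_squared[of "cmod a" "cmod z"] \<open>0 < ?D\<close> by linarith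
  then show ?thesis
    by (rule power2_le_imp_le) (simp add: radius_add_def)
qed

lemma norm_disk_moebius_less_1:
  assumes "cmod a < 1" "cmod b = 1" "cmod z < 1"
  shows "cmod (disk_moebius a b z) < 1"
  using norm_disk_moebius_le[OF assms] radius_add_bounds[of "cmod a" "cmod z"] assms by simp

lemma holomorphic_on_disk_moebius:
  assumes "cmod a < 1" "cmod b = 1"
  shows "disk_moebius a b holomorphic_on ball 0 1"
  unfolding disk_moebius_def
  by (intro holomorphic_intros) (use moebius_denom_nonzero[OF assms] in auto)

lemma disk_moebius_inverse:
  assumes "cmod a < 1" "cmod b = 1" "cmod z < 1"
  shows "disk_moebius (- (cnj b * a)) (cnj b) (disk_moebius a b z) = z"
proof -
  have bb: "b * cnj b = 1" using assms complex_norm_square[of b] by simp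
  have Q: "1 + b * cnj a * z \<noteq> 0" using moebius_denom_nonzero[OF assms(1,2)] assms(3) by simp
  have "(cmod a)\<^sup>2 < 1" using assms(1) abs_square_less_1 by fastforce
  then have aa: "1 - a * cnj a \<noteq> 0" by (metis one_minus_mult_cnj of_real_eq_0_iff right_minus_eq less_irrefl)
  define w where "w = disk_moebius a b z"
  have mw: "disk_moebius (- (cnj b * a)) (cnj b) w = cnj b * (w - a) / (1 - (b * cnj b) * cnj a * w)"
    by (simp add: disk_moebius_def algebra_simps)
  have e1: "w - a = b * z * (1 - a * cnj a) / (1 + b * cnj a * z)"
    using Q by (simp add: w_def disk_moebius_def field_simps)
  have e2: "1 - cnj a * w = (1 - a * cnj a) / (1 + b * cnj a * z)"
    using Q by (simp add: w_def disk_moebius_def field_simps)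
  have cancel: "\<And>c u Y Q :: complex. Q \<noteq> 0 \<Longrightarrow> Y \<noteq> 0 \<Longrightarrow> c * (u * Y / Q) / (Y / Q) = c * u"
    by (simp add: field_simps)
  have "disk_moebius (- (cnj b * a)) (cnj b) w = cnj b * (b * z)"
    unfolding mw bb e1 using e2 cancel[OF Q aa, of "cnj b" "b * z"] by (simp add: mult.assoc)
  then show ?thesis using bb by (simp add: w_def algebra_simps)
qed

lemma disk_moebius_inverse':
  assumes "cmod a < 1" "cmod b = 1" "cmod z < 1"
  shows "disk_moebius a b (disk_moebius (- (cnj b * a)) (cnj b) z) = z"
proof -
  have e: "b * (cnj b * a) = a"
    using assms(2) complex_norm_square[of b] by (simp flip: mult.assoc)
  have "disk_moebius (- (cnj (cnj b) * (- (cnj b * a)))) (cnj (cnj b))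
          (disk_moebius (- (cnj b * a)) (cnj b) z) = z"
    by (rule disk_moebius_inverse) (use assms in \<open>auto simp: norm_mult\<close>)
  then show ?thesis by (simp only: complex_cnj_cnj mult_minus_right minus_minus e)
qed

lemma inv_into_disk_moebius:
  assumes "cmod a < 1" "cmod b = 1" "cmod z < 1"
  shows "inv_into unit_disk (disk_moebius a b) z = disk_moebius (- (cnj b * a)) (cnj b) z"
proof (rule inv_into_f_eq)
  show "inj_on (disk_moebius a b) unit_disk"
    by (rule inj_on_inverseI[where g="disk_moebius (- (cnj b * a)) (cnj b)"])
      (use disk_moebius_inverse assms in auto)
  show "disk_moebius (- (cnj b * a)) (cnj b) z \<in> unit_disk"
    using norm_disk_moebius_less_1[of "- (cnj b * a)" "cnj b" z] assms by (simp add: norm_mult)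
  show "disk_moebius a b (disk_moebius (- (cnj b * a)) (cnj b) z) = z"
    by (rule disk_moebius_inverse'[OF assms])
qed

lemma disk_moebius_lipschitz:
  assumes "cmod a < 1" "cmod b = 1" "cmod x < 1" "cmod y < 1"
  shows "cmod (disk_moebius a b x - disk_moebius a b y) \<le> 2 / (1 - cmod a) * cmod (x - y)"
proof -
  let ?Qx = "1 + b * cnj a * x" and ?Qy = "1 + b * cnj a * y"
  have Qx: "?Qx \<noteq> 0" and Qy: "?Qy \<noteq> 0"
    using moebius_denom_nonzero[OF assms(1,2)] assms(3,4) by auto
  have gx: "1 - cmod a \<le> cmod ?Qx" and gy: "1 - cmod a \<le> cmod ?Qy"
    using norm_moebius_denom_ge[OF assms(2)] assms(3,4) by auto
  have "(cmod a)\<^sup>2 < 1" using assms(1) abs_square_less_1 by fastforce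
  then have na: "cmod (1 - a * cnj a) = 1 - (cmod a)\<^sup>2"
    by (simp only: one_minus_mult_cnj norm_of_real)
  have "disk_moebius a b x - disk_moebius a b y = b * (1 - a * cnj a) * (x - y) / (?Qx * ?Qy)"
    using Qx Qy by (simp add: disk_moebius_def field_simps)
  then have "cmod (disk_moebius a b x - disk_moebius a b y)
      = (1 - (cmod a)\<^sup>2) * cmod (x - y) / (cmod ?Qx * cmod ?Qy)"
    using assms(2) na by (simp add: norm_mult norm_divide)
  also have "\<dots> \<le> (1 - (cmod a)\<^sup>2) * cmod (x - y) / ((1 - cmod a) * (1 - cmod a))"
    using assms(1) gx gy
      order_less_le_trans[of 0 "1 - cmod a" "cmod ?Qx"] order_less_le_trans[of 0 "1 - cmod a" "cmod ?Qy"]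
    by (intro divide_left_mono mult_mono mult_nonneg_nonneg) (auto simp: abs_square_less_1 less_imp_le)
  also have "\<dots> = (1 + cmod a) / (1 - cmod a) * cmod (x - y)"
  proof -
    have "1 - (cmod a)\<^sup>2 = (1 + cmod a) * (1 - cmod a)" by (simp add: power2_eq_square algebra_simps)
    then show ?thesis using assms(1) by simp
  qed
  also have "\<dots> \<le> 2 / (1 - cmod a) * cmod (x - y)"
    using assms(1) by (intro mult_right_mono divide_right_mono) auto
  finally show ?thesis .
qed

lemma disk_moebius_lipschitz_params:
  assumes "cmod a \<le> A" "cmod a' \<le> A" "A < 1" "cmod b = 1" "cmod b' = 1" "cmod x < 1"
  shows "cmod (disk_moebius a b x - disk_moebius a' b' x) \<le> 4 / (1 - A)\<^sup>2 * (cmod (a - a') + cmod (b - b'))"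
proof -
  let ?N = "b * x + a" and ?N' = "b' * x + a'" and ?Q = "1 + b * cnj a * x" and ?Q' = "1 + b' * cnj a' * x"
  let ?\<delta> = "cmod (a - a') + cmod (b - b')"
  have x1: "cmod x \<le> 1" using assms(6) by simp
  have g: "1 - A \<le> cmod ?Q" using norm_moebius_denom_ge[OF assms(4) x1, of a] assms by auto
  have g': "1 - A \<le> cmod ?Q'" using norm_moebius_denom_ge[OF assms(5) x1, of a'] assms by auto
  have "cmod (?N - ?N') = cmod ((b - b') * x + (a - a'))" by (simp add: algebra_simps)
  also have "\<dots> \<le> cmod (b - b') * cmod x + cmod (a - a')" by (metis norm_mult norm_triangle_ineq)
  also have "\<dots> \<le> ?\<delta>" using x1 by (simp add: mult_left_le)
  finally have dN: "cmod (?N - ?N') \<le> ?\<delta>" .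
  have "cmod ?Q' \<le> 1 + cmod a' * cmod x" by (rule norm_moebius_denom_le[OF assms(5)])
  also have "\<dots> \<le> 2" using assms x1 mult_le_one[of "cmod a'" "cmod x"] by simp
  finally have Q'2: "cmod ?Q' \<le> 2" .
  have "cmod ?N' \<le> cmod (b' * x) + cmod a'" by (rule norm_triangle_ineq)
  also have "\<dots> \<le> 2" using assms x1 by (simp add: norm_mult)
  finally have N'2: "cmod ?N' \<le> 2" .
  have "cmod (?Q' - ?Q) = cmod (((b' - b) * cnj a' + b * (cnj a' - cnj a)) * x)"
    by (simp add: algebra_simps)
  also have "\<dots> \<le> cmod ((b' - b) * cnj a' + b * (cnj a' - cnj a))"
    using x1 by (simp add: norm_mult mult_left_le)
  also have "\<dots> \<le> cmod (b' - b) * cmod a' + cmod (a' - a)"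
    using assms(4) by (metis (no_types) complex_cnj_diff complex_mod_cnj mult_1 norm_mult norm_triangle_ineq)
  also have "\<dots> \<le> cmod (b' - b) + cmod (a' - a)" using assms by (simp add: mult_left_le)
  finally have dQ: "cmod (?Q' - ?Q) \<le> ?\<delta>" by (simp add: norm_minus_commute)
  have "?Q \<noteq> 0" "?Q' \<noteq> 0" using g g' assms(3) by auto
  then have "disk_moebius a b x - disk_moebius a' b' x = ((?N - ?N') * ?Q' + ?N' * (?Q' - ?Q)) / (?Q * ?Q')"
    by (simp add: disk_moebius_def field_simps)
  moreover have "cmod ((?N - ?N') * ?Q' + ?N' * (?Q' - ?Q)) \<le> 4 * ?\<delta>"
  proof -
    have "cmod ((?N - ?N') * ?Q' + ?N' * (?Q' - ?Q)) \<le> cmod (?N - ?N') * cmod ?Q' + cmod ?N' * cmod (?Q' - ?Q)"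
      by (metis norm_mult norm_triangle_ineq)
    also have "\<dots> \<le> ?\<delta> * 2 + 2 * ?\<delta>"
      by (intro add_mono mult_mono dN Q'2 N'2 dQ) auto
    finally show ?thesis by simp
  qed
  moreover have "(1 - A)\<^sup>2 \<le> cmod (?Q * ?Q')"
    using g g' assms(3) by (simp add: norm_mult power2_eq_square mult_mono)
  ultimately have "cmod (disk_moebius a b x - disk_moebius a' b' x) \<le> 4 * ?\<delta> / (1 - A)\<^sup>2"
    using assms(3) by (simp only: norm_divide) (rule frac_le, auto)
  then show ?thesis by simp
qed

lemma Schwarz_Pick:
  assumes holf: "f holomorphic_on ball 0 1" and fD: "\<And>z. cmod z < 1 \<Longrightarrow> cmod (f z) < 1"
    and x: "cmod x < 1" and y: "cmod y < 1"
  shows "cmod (disk_moebius (- f y) 1 (f x)) \<le> cmod (disk_moebius (- y) 1 x)"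
proof -
  define g where "g = disk_moebius (- f y) 1 \<circ> f \<circ> disk_moebius y 1"
  have fy: "cmod (f y) < 1" using fD y by simp
  have my: "\<And>z. cmod z < 1 \<Longrightarrow> cmod (disk_moebius y 1 z) < 1"
    using norm_disk_moebius_less_1[of y 1] y by simp
  have "g holomorphic_on ball 0 1"
    unfolding g_def
  proof (rule holomorphic_on_compose_gen[where t="ball 0 1"])
    show "disk_moebius (- f y) 1 \<circ> f holomorphic_on ball 0 1"
      by (rule holomorphic_on_compose_gen[where t="ball 0 1"])
        (use holomorphic_on_disk_moebius[of "- f y" 1] fy holf fD in auto)
    show "disk_moebius y 1 holomorphic_on ball 0 1" using holomorphic_on_disk_moebius[of y 1] y by simp
    show "disk_moebius y 1 ` ball 0 1 \<subseteq> ball 0 1" using my by auto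
  qed
  moreover have "g 0 = 0" by (simp add: g_def disk_moebius_def)
  moreover have "\<And>z. cmod z < 1 \<Longrightarrow> cmod (g z) < 1"
    unfolding g_def using my fD norm_disk_moebius_less_1[of "- f y" 1] fy by simp
  moreover have "cmod (disk_moebius (- y) 1 x) < 1" using norm_disk_moebius_less_1[of "- y" 1 x] x y by simp
  ultimately have "cmod (g (disk_moebius (- y) 1 x)) \<le> cmod (disk_moebius (- y) 1 x)"
    by (rule Schwarz_Lemma(1))
  moreover have "g (disk_moebius (- y) 1 x) = disk_moebius (- f y) 1 (f x)"
    using disk_moebius_inverse'[of y 1 x] x y by (simp add: g_def)
  ultimately show ?thesis by simp
qed

lemma norm_self_map_le:
  assumes holf: "f holomorphic_on ball 0 1" and fD: "\<And>z. cmod z < 1 \<Longrightarrow> cmod (f z) < 1"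
    and x: "cmod x < 1"
  shows "cmod (f x) \<le> radius_add (cmod (f 0)) (cmod x)"
proof -
  have f0: "cmod (f 0) < 1" using fD by simp
  define v where "v = disk_moebius (- f 0) 1 (f x)"
  have v: "cmod v \<le> cmod x" using Schwarz_Pick[OF holf fD x, of 0] by (simp add: v_def disk_moebius_def)
  have "f x = disk_moebius (f 0) 1 v" using disk_moebius_inverse'[of "f 0" 1 "f x"] f0 fD x by (simp add: v_def)
  then have "cmod (f x) \<le> radius_add (cmod (f 0)) (cmod v)"
    using norm_disk_moebius_le[of "f 0" 1 v] f0 v x by simp
  also have "\<dots> \<le> radius_add (cmod (f 0)) (cmod x)"
    using f0 v by (intro radius_add_mono_right) auto
  finally show ?thesis .
qed

lemma norm_disk_moebius_shift_le:
  assumes "cmod \<alpha> \<le> 1/2" "cmod y < 1"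
  shows "cmod (disk_moebius (- \<alpha>) 1 y - y) \<le> 4 * cmod \<alpha>"
proof -
  have "cmod (cnj \<alpha> * y) \<le> 1/2"
    using assms mult_left_le[of "cmod y" "cmod \<alpha>"] by (simp add: norm_mult)
  then have den: "1/2 \<le> cmod (1 - cnj \<alpha> * y)"
    using norm_triangle_ineq2[of 1 "cnj \<alpha> * y"] by simp
  then have "1 - cnj \<alpha> * y \<noteq> 0" by auto
  then have "disk_moebius (- \<alpha>) 1 y - y = (cnj \<alpha> * y * y - \<alpha>) / (1 - cnj \<alpha> * y)"
    by (simp add: disk_moebius_def field_simps)
  moreover have "cmod (cnj \<alpha> * y * y - \<alpha>) \<le> 2 * cmod \<alpha>"
  proof -
    have "cmod (cnj \<alpha> * y * y) \<le> cmod \<alpha>"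
      using assms(2) mult_left_le[of "cmod y * cmod y" "cmod \<alpha>"]
      by (simp add: norm_mult mult_le_one mult.assoc)
    then show ?thesis using norm_triangle_ineq4[of "cnj \<alpha> * y * y" \<alpha>] by simp
  qed
  ultimately have "cmod (disk_moebius (- \<alpha>) 1 y - y) \<le> 2 * cmod \<alpha> / (1/2)"
    using den by (simp only: norm_divide) (rule frac_le, auto)
  then show ?thesis by simp
qed

text \<open>If \<open>x\<close> is pseudo-hyperbolically \<open>r\<close>-close to \<open>w\<close>, then its distance to the boundary
  point \<open>1\<close> is comparable to that of \<open>w\<close>.\<close>
lemma norm_one_minus_le_pseudo_close:
  assumes w1: "cmod w < 1" and x1: "cmod x < 1"
    and rho: "cmod (disk_moebius (- w) 1 x) \<le> r" and r: "r < 1"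
  shows "cmod (1 - x) \<le> (1 + 2 * r / (1 - r)) * cmod (1 - w)"
proof -
  have r0: "0 \<le> r" using rho norm_ge_zero order_trans by blast
  have "cmod (cnj w * x) < 1"
    using w1 x1 mult_left_le[of "cmod x" "cmod w"] by (simp add: norm_mult)
  then have den: "1 - cnj w * x \<noteq> 0" by auto
  have "(cmod w)\<^sup>2 < 1" using w1 abs_square_less_1 by fastforce
  then have nw: "cmod (1 - w * cnj w) = 1 - (cmod w)\<^sup>2"
    by (simp only: one_minus_mult_cnj norm_of_real)
  have "cmod (x - w) \<le> r * cmod (1 - cnj w * x)"
    using rho den by (simp add: disk_moebius_def norm_divide divide_le_eq)
  also have "cmod (1 - cnj w * x) \<le> (1 - (cmod w)\<^sup>2) + cmod w * cmod (x - w)"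
  proof -
    have "1 - cnj w * x = (1 - w * cnj w) + cnj w * (w - x)" by (simp add: algebra_simps)
    then have "cmod (1 - cnj w * x) \<le> cmod (1 - w * cnj w) + cmod (cnj w * (w - x))"
      by (metis norm_triangle_ineq)
    then show ?thesis using nw by (simp add: norm_mult norm_minus_commute)
  qed
  finally have "cmod (x - w) \<le> r * ((1 - (cmod w)\<^sup>2) + cmod w * cmod (x - w))"
    using r0 by (simp add: mult_left_mono)
  also have "\<dots> \<le> r * (1 - (cmod w)\<^sup>2) + r * cmod (x - w)"
    using r0 w1 mult_left_le_one_le[of "cmod (x - w)" "cmod w"]
    by (simp add: distrib_left mult_left_mono)
  finally have "(1 - r) * cmod (x - w) \<le> r * (1 - (cmod w)\<^sup>2)" by (simp add: algebra_simps)
  moreover have "1 - (cmod w)\<^sup>2 \<le> 2 * cmod (1 - w)"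
  proof -
    have "1 - (cmod w)\<^sup>2 = (1 - cmod w) * (1 + cmod w)" by (simp add: power2_eq_square algebra_simps)
    also have "\<dots> \<le> (1 - cmod w) * 2" using w1 by (intro mult_left_mono) auto
    also have "1 - cmod w \<le> cmod (1 - w)" by (metis norm_one norm_triangle_ineq2)
    finally show ?thesis by simp
  qed
  ultimately have "(1 - r) * cmod (x - w) \<le> r * (2 * cmod (1 - w))"
    using r0 by (meson mult_left_mono order_trans)
  then have "cmod (x - w) \<le> 2 * r / (1 - r) * cmod (1 - w)"
    using r by (simp add: field_simps)
  moreover have "cmod (1 - x) \<le> cmod (1 - w) + cmod (x - w)"
    using norm_triangle_ineq4[of "1 - w" "x - w"] by simp
  ultimately show ?thesis by (simp add: algebra_simps)
qed

lemma self_map_fixing_0_displacement_le: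
  assumes holg: "g holomorphic_on ball 0 1" and g0: "g 0 = 0"
    and gD: "\<And>z. cmod z < 1 \<Longrightarrow> cmod (g z) < 1"
    and z: "cmod z < 1" and rho: "cmod (disk_moebius (- (1/2)) 1 z) \<le> r" and r: "r < 1"
  shows "cmod (g z - z) \<le> (1 + 2 * r / (1 - r)) * cmod (1 - 2 * g (1/2))"
proof (cases "z = 0")
  case True
  have "0 \<le> r" using rho norm_ge_zero order_trans by blast
  then show ?thesis using True g0 r by simp
next
  case znz: False
  let ?K = "1 + 2 * r / (1 - r)"
  have r0: "0 \<le> r" using rho norm_ge_zero order_trans by blast
  obtain q where holq: "q holomorphic_on ball 0 1" and gq: "\<And>z. cmod z < 1 \<Longrightarrow> g z = z * q z"
    and q0: "deriv g 0 = q 0"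
    using Schwarz3[OF holg g0] by blast
  have half: "cmod (1/2 :: complex) < 1" by (simp add: norm_divide)
  have q1: "cmod (q x) \<le> 1" if x: "cmod x < 1" for x
  proof (cases "x = 0")
    case True
    then show ?thesis using Schwarz_Lemma(2)[OF holg g0 gD x] q0 by simp
  next
    case False
    have "cmod x * cmod (q x) \<le> cmod x * 1"
      using Schwarz_Lemma(1)[OF holg g0 gD x] gq[OF x] by (simp add: norm_mult)
    then show ?thesis using False by (simp add: mult_le_cancel_left_pos)
  qed
  \<comment> \<open>Either \<open>g\<close> is a rotation, or \<open>q = g(z)/z\<close> is a self-map of the disk and Schwarz--Pick applies.\<close>
  have "cmod (1 - q z) \<le> ?K * cmod (1 - q (1/2))"
  proof (cases "\<exists>x. cmod x < 1 \<and> cmod (q x) = 1")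
    case True
    then obtain x where x: "cmod x < 1" "cmod (q x) = 1" by blast
    have "(\<exists>y. cmod y < 1 \<and> y \<noteq> 0 \<and> cmod (g y) = cmod y) \<or> cmod (deriv g 0) = 1"
      using x gq[OF x(1)] q0 by (cases "x = 0") (auto simp: norm_mult)
    then obtain \<beta> where "\<And>y. cmod y < 1 \<Longrightarrow> g y = \<beta> * y"
      using Schwarz_Lemma(3)[OF holg g0 gD z] by blast
    then have "\<And>y. y \<noteq> 0 \<Longrightarrow> cmod y < 1 \<Longrightarrow> q y = \<beta>"
      using gq by (metis mult.commute mult_right_cancel)
    then have "q z = q (1/2)" using znz z half by simp
    moreover have "1 \<le> ?K" using r0 r by simp
    ultimately show ?thesis by (simp add: mult_le_cancel_right1)
  next
    case False
    then have qD: "\<And>x. cmod x < 1 \<Longrightarrow> cmod (q x) < 1"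
      using q1 by (meson order_le_less)
    show ?thesis
      by (rule norm_one_minus_le_pseudo_close)
        (use qD z half Schwarz_Pick[OF holq qD z half] rho r in auto)
  qed
  moreover have "cmod (g z - z) \<le> cmod (1 - q z)"
  proof -
    have "g z - z = z * (q z - 1)" using gq[OF z] by (simp add: algebra_simps)
    then have "cmod (g z - z) = cmod z * cmod (1 - q z)" by (simp add: norm_mult norm_minus_commute)
    then show ?thesis using z by (simp add: mult_left_le_one_le)
  qed
  moreover have "q (1/2) = 2 * g (1/2)" using gq[OF half] by (simp add: mult.commute)
  ultimately show ?thesis by (metis order_trans)
qed

lemma self_map_displacement_le:
  assumes R: "0 \<le> R" "R < 1"
  obtains C where "0 \<le> C"
    and "\<And>f \<zeta>. f holomorphic_on ball 0 1 \<Longrightarrow> (\<And>z. cmod z < 1 \<Longrightarrow> cmod (f z) < 1) \<Longrightarrow> cmod \<zeta> \<le> R \<Longrightarrow>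
           cmod (f \<zeta> - \<zeta>) \<le> C * (cmod (f 0) + cmod (f (1/2) - 1/2))"
proof
  define r where "r = radius_add (1/2) R"
  define K where "K = 1 + 2 * r / (1 - r)"
  have r: "0 \<le> r" "r < 1" using radius_add_bounds[of "1/2" R] R by (simp_all add: r_def)
  then have K1: "1 \<le> K" by (simp add: K_def)
  show "0 \<le> 4 + 8 * K" using K1 by simp
  fix f \<zeta>
  assume holf: "f holomorphic_on ball 0 1" and fD: "\<And>z. cmod z < 1 \<Longrightarrow> cmod (f z) < 1"
    and z: "cmod \<zeta> \<le> R"
  let ?e = "cmod (f 0) + cmod (f (1/2) - 1/2)"
  have zD: "cmod \<zeta> < 1" using z R by simp
  show "cmod (f \<zeta> - \<zeta>) \<le> (4 + 8 * K) * ?e"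
  proof (cases "1/2 \<le> cmod (f 0)")
    case True
    have "cmod (f \<zeta> - \<zeta>) \<le> cmod (f \<zeta>) + cmod \<zeta>" by (rule norm_triangle_ineq4)
    also have "\<dots> \<le> 4 * ?e"
      unfolding distrib_left using fD[OF zD] zD True norm_ge_zero[of "f (1/2) - 1/2"] by linarith
    also have "\<dots> \<le> (4 + 8 * K) * ?e" using K1 by (intro mult_right_mono) auto
    finally show ?thesis .
  next
    case False
    \<comment> \<open>Move \<open>f(0)\<close> to the origin; this displaces points by at most \<open>4 \<bar>f(0)\<bar>\<close>.\<close>
    define g where "g = disk_moebius (- f 0) 1 \<circ> f"
    have f0: "cmod (f 0) \<le> 1/2" using False by simp
    have gf: "cmod (g x - f x) \<le> 4 * cmod (f 0)" if "cmod x < 1" for x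
      unfolding g_def using norm_disk_moebius_shift_le[OF f0 fD[OF that]] by simp
    have "cmod (disk_moebius (- (1/2)) 1 \<zeta>) \<le> radius_add (1/2) (cmod \<zeta>)"
      using norm_disk_moebius_le[of "- (1/2)" 1 \<zeta>] zD by (simp add: norm_divide)
    also have "\<dots> \<le> r" unfolding r_def using z by (intro radius_add_mono_right) auto
    finally have rho: "cmod (disk_moebius (- (1/2)) 1 \<zeta>) \<le> r" .
    have "cmod (g \<zeta> - \<zeta>) \<le> K * cmod (1 - 2 * g (1/2))"
      unfolding K_def
    proof (rule self_map_fixing_0_displacement_le[OF _ _ _ zD rho r(2)])
      show "g holomorphic_on ball 0 1" unfolding g_def
        by (rule holomorphic_on_compose_gen[where t="ball 0 1"])
          (use holf fD holomorphic_on_disk_moebius[of "- f 0" 1] f0 in auto)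
      show "g 0 = 0" by (simp add: g_def disk_moebius_def)
      show "\<And>z. cmod z < 1 \<Longrightarrow> cmod (g z) < 1"
        unfolding g_def using fD norm_disk_moebius_less_1[of "- f 0" 1] f0 by simp
    qed
    moreover have "cmod (1 - 2 * g (1/2)) \<le> 2 * cmod (f (1/2) - 1/2) + 8 * cmod (f 0)"
    proof -
      have "1 - 2 * g (1/2) = 2 * ((1/2 - f (1/2)) + (f (1/2) - g (1/2)))" by (simp add: algebra_simps)
      then have "cmod (1 - 2 * g (1/2)) = 2 * cmod ((1/2 - f (1/2)) + (f (1/2) - g (1/2)))"
        by (metis norm_mult norm_numeral)
      then have "cmod (1 - 2 * g (1/2)) \<le> 2 * (cmod (1/2 - f (1/2)) + cmod (f (1/2) - g (1/2)))"
        using norm_triangle_ineq[of "1/2 - f (1/2)" "f (1/2) - g (1/2)"] unfolding distrib_left by linarith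
      moreover have "cmod (f (1/2) - g (1/2)) \<le> 4 * cmod (f 0)"
        using gf[of "1/2"] by (simp add: norm_divide norm_minus_commute)
      ultimately show ?thesis by (simp add: norm_minus_commute)
    qed
    ultimately have "cmod (g \<zeta> - \<zeta>) \<le> K * (2 * cmod (f (1/2) - 1/2) + 8 * cmod (f 0))"
      using K1 by (meson mult_left_mono order_trans zero_le_one)
    moreover have "cmod (f \<zeta> - \<zeta>) \<le> cmod (f \<zeta> - g \<zeta>) + cmod (g \<zeta> - \<zeta>)"
      by (rule norm_diff_triangle_ineq[of "f \<zeta>" "g \<zeta>" "g \<zeta>" \<zeta>, simplified])
    ultimately have "cmod (f \<zeta> - \<zeta>) \<le> 4 * cmod (f 0) + K * (2 * cmod (f (1/2) - 1/2) + 8 * cmod (f 0))"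
      using gf[OF zD] norm_minus_commute[of "f \<zeta>" "g \<zeta>"] by linarith
    also have "\<dots> \<le> (4 + 8 * K) * ?e"
      using K1 by (simp add: algebra_simps)
    finally show ?thesis .
  qed
qed

lemma set_integrable_iff_integrable_lebesgue_on:
  fixes F :: "real \<Rightarrow> real"
  assumes "S \<in> sets lebesgue"
  shows "set_integrable lebesgue S F \<longleftrightarrow> integrable (lebesgue_on S) F"
  unfolding set_integrable_def using integrable_restrict_space[of S lebesgue F] assms by simp

lemma Lp_on_imp_integrable:
  fixes f :: "real \<Rightarrow> real"
  assumes d: "1 \<le> d" and L: "Lp_on d {a..b} f"
  shows "integrable (lebesgue_on {a..b}) f"
proof -
  have meas: "f \<in> borel_measurable (lebesgue_on {a..b})" using L by (simp add: Lp_on_def)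
  have const: "integrable (lebesgue_on {a..b}) (\<lambda>x::real. c)" for c :: real
    using continuous_imp_integrable[of a b "\<lambda>x::real. c"] by simp
  show ?thesis
  proof (cases "d = \<infinity>")
    case True
    then obtain C where "AE x in lebesgue_on {a..b}. norm (f x) \<le> C" using L by (auto simp: Lp_on_def)
    then have "AE x in lebesgue_on {a..b}. norm (f x) \<le> norm C" by eventually_elim auto
    then show ?thesis by (rule Bochner_Integration.integrable_bound[OF const meas])
  next
    case False
    define p where "p = real_of_ereal d"
    have p1: "1 \<le> p" using d False unfolding p_def by (cases d) auto
    have "integrable (lebesgue_on {a..b}) (\<lambda>x. norm (f x) powr p)"
      using L False by (simp add: Lp_on_def p_def set_integrable_iff_integrable_lebesgue_on)
    then have "integrable (lebesgue_on {a..b}) (\<lambda>x. 1 + norm (f x) powr p)"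
      by (rule Bochner_Integration.integrable_add[OF const])
    moreover have "norm (f x) \<le> norm (1 + norm (f x) powr p)" for x
    proof -
      have "norm (f x) \<le> 1 + norm (f x) powr p"
      proof (cases "norm (f x) \<le> 1")
        case True
        have "0 \<le> norm (f x) powr p" by simp
        with True show ?thesis by linarith
      next
        case False
        then have "norm (f x) powr 1 \<le> norm (f x) powr p" using p1 by (intro powr_mono) auto
        then show ?thesis using False by simp
      qed
      then show ?thesis by simp
    qed
    ultimately show ?thesis
      by (intro Bochner_Integration.integrable_bound[OF _ meas] AE_I2) blast+
  qed
qed

lemma Lp_on_imp_integrable_on:
  fixes f :: "real \<Rightarrow> real"
  assumes "1 \<le> d" "Lp_on d {a..b} f" "{u..t} \<subseteq> {a..b}"
  shows "f integrable_on {u..t}"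
  using integrable_subinterval_real[OF integrable_on_lebesgue_on[OF Lp_on_imp_integrable[OF assms(1,2)]] assms(3)]
  by simp

lemma powr_add_le_two_powr:
  fixes x y p :: real
  assumes "0 \<le> x" "0 \<le> y" "0 \<le> p"
  shows "(x + y) powr p \<le> 2 powr p * (x powr p + y powr p)"
proof -
  have "(x + y) powr p \<le> (2 * max x y) powr p"
    using assms by (intro powr_mono2) auto
  also have "\<dots> = 2 powr p * max x y powr p" using assms by (simp add: powr_mult)
  also have "\<dots> \<le> 2 powr p * (x powr p + y powr p)"
    by (intro mult_left_mono) (auto simp: max_def)
  finally show ?thesis .
qed

lemma Lp_on_add:
  fixes f g :: "real \<Rightarrow> real"
  assumes d: "1 \<le> d" and S: "S \<in> sets lebesgue" and f: "Lp_on d S f" and g: "Lp_on d S g"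
  shows "Lp_on d S (\<lambda>x. f x + g x)"
proof -
  have m: "(\<lambda>x. f x + g x) \<in> borel_measurable (lebesgue_on S)"
    using f g by (auto simp: Lp_on_def)
  show ?thesis
  proof (cases "d = \<infinity>")
    case True
    then obtain C1 C2 where "AE x in lebesgue_on S. norm (f x) \<le> C1" "AE x in lebesgue_on S. norm (g x) \<le> C2"
      using f g by (auto simp: Lp_on_def)
    then have "AE x in lebesgue_on S. norm (f x + g x) \<le> C1 + C2"
      by eventually_elim (rule order_trans[OF norm_triangle_ineq add_mono])
    then show ?thesis using True m by (auto simp: Lp_on_def)
  next
    case False
    define p where "p = real_of_ereal d"
    have p0: "0 \<le> p" using d False unfolding p_def by (cases d) auto
    have "integrable (lebesgue_on S) (\<lambda>x. norm (f x) powr p)" "integrable (lebesgue_on S) (\<lambda>x. norm (g x) powr p)"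
      using f g False S by (auto simp: Lp_on_def p_def set_integrable_iff_integrable_lebesgue_on)
    then have int: "integrable (lebesgue_on S) (\<lambda>x. 2 powr p * (norm (f x) powr p + norm (g x) powr p))"
      by (intro Bochner_Integration.integrable_mult_right Bochner_Integration.integrable_add)
    have bound: "norm (f x + g x) powr p \<le> 2 powr p * (norm (f x) powr p + norm (g x) powr p)" for x
    proof -
      have "norm (f x + g x) powr p \<le> (norm (f x) + norm (g x)) powr p"
        using p0 by (intro powr_mono2 norm_triangle_ineq) auto
      also have "\<dots> \<le> 2 powr p * (norm (f x) powr p + norm (g x) powr p)"
        using p0 by (intro powr_add_le_two_powr) auto
      finally show ?thesis .
    qed
    from int have "integrable (lebesgue_on S) (\<lambda>x. norm (f x + g x) powr p)"
    proof (rule Bochner_Integration.integrable_bound)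
      show "(\<lambda>x. norm (f x + g x) powr p) \<in> borel_measurable (lebesgue_on S)" using m by measurable
      show "AE x in lebesgue_on S. norm (norm (f x + g x) powr p)
              \<le> norm (2 powr p * (norm (f x) powr p + norm (g x) powr p))"
        using bound by (intro AE_I2) simp
    qed
    then show ?thesis using False m S by (simp add: Lp_on_def p_def set_integrable_iff_integrable_lebesgue_on)
  qed
qed

lemma Lp_on_cmult:
  fixes f :: "real \<Rightarrow> real"
  assumes S: "S \<in> sets lebesgue" and f: "Lp_on d S f"
  shows "Lp_on d S (\<lambda>x. c * f x)"
proof -
  have m: "(\<lambda>x. c * f x) \<in> borel_measurable (lebesgue_on S)" using f by (auto simp: Lp_on_def)
  show ?thesis
  proof (cases "d = \<infinity>")
    case True
    then obtain C where "AE x in lebesgue_on S. norm (f x) \<le> C" using f by (auto simp: Lp_on_def)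
    then have "AE x in lebesgue_on S. norm (c * f x) \<le> \<bar>c\<bar> * C"
      by eventually_elim (simp add: abs_mult mult_left_mono)
    then show ?thesis using True m by (auto simp: Lp_on_def)
  next
    case False
    define p where "p = real_of_ereal d"
    have "integrable (lebesgue_on S) (\<lambda>x. \<bar>c\<bar> powr p * norm (f x) powr p)"
      using f False S by (auto simp: Lp_on_def p_def set_integrable_iff_integrable_lebesgue_on)
    moreover have "(\<lambda>x. norm (c * f x) powr p) = (\<lambda>x. \<bar>c\<bar> powr p * norm (f x) powr p)"
      by (simp add: abs_mult powr_mult)
    ultimately show ?thesis using False m S by (simp add: Lp_on_def p_def set_integrable_iff_integrable_lebesgue_on)
  qed
qed

lemma Lp_on_norm:
  fixes g :: "real \<Rightarrow> complex"
  assumes "Lp_on d S g"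
  shows "Lp_on d S (\<lambda>x. norm (g x))"
  using assms unfolding Lp_on_def by (auto intro: borel_measurable_norm)

lemma abs_cont_onD:
  assumes "abs_cont_on S f" "0 < e"
  obtains \<delta> where "0 < \<delta>"
    "\<And>(n::nat) u v. (\<forall>i<n. u i \<in> S \<and> v i \<in> S \<and> u i \<le> v i) \<Longrightarrow>
       (\<forall>i<n. \<forall>j<n. i \<noteq> j \<longrightarrow> v i \<le> u j \<or> v j \<le> u i) \<Longrightarrow> (\<Sum>i<n. v i - u i) < \<delta> \<Longrightarrow>
       (\<Sum>i<n. norm (f (v i) - f (u i))) < e"
proof -
  have "\<exists>\<delta>>0. \<forall>(n::nat) (u::nat \<Rightarrow> real) (v::nat \<Rightarrow> real). (\<forall>i<n. u i \<in> S \<and> v i \<in> S \<and> u i \<le> v i) \<and>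
       (\<forall>i<n. \<forall>j<n. i \<noteq> j \<longrightarrow> v i \<le> u j \<or> v j \<le> u i) \<and> (\<Sum>i<n. v i - u i) < \<delta> \<longrightarrow>
       (\<Sum>i<n. norm (f (v i) - f (u i))) < e"
    using assms unfolding abs_cont_on_def by blast
  then obtain \<delta> where \<delta>: "0 < \<delta>" and H: "\<forall>(n::nat) (u::nat \<Rightarrow> real) (v::nat \<Rightarrow> real). (\<forall>i<n. u i \<in> S \<and> v i \<in> S \<and> u i \<le> v i) \<and>
       (\<forall>i<n. \<forall>j<n. i \<noteq> j \<longrightarrow> v i \<le> u j \<or> v j \<le> u i) \<and> (\<Sum>i<n. v i - u i) < \<delta> \<longrightarrow>
       (\<Sum>i<n. norm (f (v i) - f (u i))) < e"
    by blast
  show ?thesis by (rule that[OF \<delta>]) (use H in blast)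
qed
lemma abs_cont_on_imp_continuous_on:
  assumes "abs_cont_on S f"
  shows "continuous_on S f"
  unfolding continuous_on_iff
proof (intro ballI allI impI)
  fix x e :: real assume x: "x \<in> S" and e: "0 < e"
  obtain \<delta> where \<delta>: "0 < \<delta>"
    and H: "\<And>(n::nat) u v. (\<forall>i<n. u i \<in> S \<and> v i \<in> S \<and> u i \<le> v i) \<Longrightarrow>
       (\<forall>i<n. \<forall>j<n. i \<noteq> j \<longrightarrow> v i \<le> u j \<or> v j \<le> u i) \<Longrightarrow> (\<Sum>i<n. v i - u i) < \<delta> \<Longrightarrow>
       (\<Sum>i<n. norm (f (v i) - f (u i))) < e"
    using abs_cont_onD[OF assms e] by blast
  show "\<exists>d>0. \<forall>y\<in>S. dist y x < d \<longrightarrow> dist (f y) (f x) < e"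
  proof (intro exI conjI ballI impI)
    fix y assume y: "y \<in> S" and yx: "dist y x < \<delta>"
    have "max x y - min x y < \<delta>" using yx by (cases "x \<le> y") (auto simp: dist_real_def max_def min_def)
    then have "norm (f (max x y) - f (min x y)) < e"
      using H[of "Suc 0" "\<lambda>_. min x y" "\<lambda>_. max x y"] x y by (simp add: min_def max_def)
    then show "dist (f y) (f x) < e"
      by (cases "x \<le> y") (simp_all add: dist_norm norm_minus_commute max_def min_def)
  qed (rule \<delta>)
qed

lemma countable_components_open:
  fixes G :: "'a::{real_normed_vector,second_countable_topology} set"
  assumes "open G"
  shows "countable (components G)"
proof (rule countable_disjoint_open_subsets)
  show "\<And>S. S \<in> components G \<Longrightarrow> open S" by (rule open_components[OF assms])
  show "pairwise disjnt (components G)"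
    using pairwise_disjoint_components[of G] unfolding disjnt_def .
qed

lemma negligible_outer_open:
  assumes N: "negligible N" and \<delta>: "0 < \<delta>"
  obtains G where "open G" "N \<subseteq> G" "G \<in> lmeasurable" "measure lebesgue G < \<delta>"
proof -
  obtain G where G: "open G" "N \<subseteq> G" "G - N \<in> lmeasurable" "emeasure lebesgue (G - N) < ennreal \<delta>"
    using sets_lebesgue_outer_open[OF negligible_imp_sets[OF N] \<delta>] by blast
  have NL: "N \<in> lmeasurable" by (rule negligible_imp_measurable[OF N])
  have Geq: "G = N \<union> (G - N)" using G(2) by auto
  have "G \<in> lmeasurable" using fmeasurable.Un[OF NL G(3)] Geq by (simp only:)
  moreover have "measure lebesgue G < \<delta>"
  proof -
    have "measure lebesgue (N \<union> (G - N)) \<le> measure lebesgue N + measure lebesgue (G - N)"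
      by (rule measure_Un_le) (use NL G(3) in \<open>auto dest: fmeasurableD\<close>)
    moreover have "measure lebesgue (G - N) < \<delta>"
      using G(4) emeasure_eq_measure2[OF G(3)] \<delta> by (simp add: ennreal_less_iff)
    ultimately show ?thesis using Geq negligible_imp_measure0[OF N] by simp
  qed
  ultimately show ?thesis by (rule that[OF G(1,2)])
qed

lemma component_Int_interval:
  fixes G :: "real set"
  assumes C: "C \<in> components G" and ne: "C \<inter> {u..t} \<noteq> {}"
  shows "u \<le> Inf (C \<inter> {u..t})" "Sup (C \<inter> {u..t}) \<le> t"
    and "C \<inter> {u..t} \<subseteq> {Inf (C \<inter> {u..t})..Sup (C \<inter> {u..t})}"
    and "{Inf (C \<inter> {u..t})<..<Sup (C \<inter> {u..t})} \<subseteq> C"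
proof -
  let ?J = "C \<inter> {u..t}"
  have bb: "bdd_below ?J" "bdd_above ?J" by (meson bdd_above_Icc bdd_below_Icc bdd_above_Int2 bdd_below_Int2)+
  show "u \<le> Inf ?J" by (rule cInf_greatest[OF ne]) simp
  show "Sup ?J \<le> t" by (rule cSup_least[OF ne]) simp
  show "?J \<subseteq> {Inf ?J..Sup ?J}" using cInf_lower[OF _ bb(1)] cSup_upper[OF _ bb(2)] by (simp add: subset_iff)
  have "is_interval C" using C in_components_connected is_interval_connected_1 by blast
  moreover have "is_interval {u..t}" by (simp add: is_interval_1)
  ultimately have Jint: "is_interval ?J" by (rule is_interval_Int)
  show "{Inf ?J<..<Sup ?J} \<subseteq> C"
  proof
    fix x assume x: "x \<in> {Inf ?J<..<Sup ?J}"
    obtain p where "p \<in> ?J" "p < x" using x cInf_less_iff[OF ne bb(1)] by auto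
    moreover obtain q where "q \<in> ?J" "x < q" using x less_cSup_iff[OF ne bb(2)] by auto
    ultimately have "x \<in> ?J" using Jint unfolding is_interval_1 by (meson less_imp_le)
    then show "x \<in> C" by simp
  qed
qed

text \<open>Distinct components cannot overlap in the interior, and a degenerate hull \<open>{a..a}\<close>
  is the single point \<open>a\<close> of its component, so the hulls do not overlap either.\<close>
lemma components_Int_interval_non_overlapping:
  fixes G :: "real set"
  assumes C: "C \<in> components G" "C \<inter> {u..t} \<noteq> {}"
    and C': "C' \<in> components G" "C' \<inter> {u..t} \<noteq> {}" and ne: "C \<noteq> C'"
  shows "Sup (C \<inter> {u..t}) \<le> Inf (C' \<inter> {u..t}) \<or> Sup (C' \<inter> {u..t}) \<le> Inf (C \<inter> {u..t})"
proof (rule ccontr)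
  define a where "a D = Inf (D \<inter> {u..t})" for D
  define b where "b D = Sup (D \<inter> {u..t})" for D
  note hull = component_Int_interval[OF C] component_Int_interval[OF C']
  have disj: "C \<inter> C' = {}"
    using C(1) C'(1) ne pairwise_disjoint_components[of G] unfolding pairwise_def by blast
  have point: "a D \<in> D" if eq: "a D = b D" and D: "D \<in> {C, C'}" for D
  proof -
    obtain x where "x \<in> D \<inter> {u..t}" using C C' D by blast
    moreover have "D \<inter> {u..t} \<subseteq> {a D..b D}" using hull D by (auto simp: a_def b_def)
    ultimately show ?thesis using eq by fastforce
  qed
  assume "\<not> ?thesis"
  then have h: "a C' < b C" "a C < b C'" by (auto simp: a_def b_def)
  have le: "a C \<le> b C" "a C' \<le> b C'"
    using hull C(2) C'(2) by (fastforce simp: a_def b_def)+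
  show False
  proof (cases "a C = b C \<or> a C' = b C'")
    case True
    then show ?thesis
    proof
      assume "a C = b C"
      then have "a C \<in> C" "a C \<in> {a C'<..<b C'}" using point[of C] h by auto
      then show False using hull(8) disj by (auto simp: a_def b_def)
    next
      assume "a C' = b C'"
      then have "a C' \<in> C'" "a C' \<in> {a C<..<b C}" using point[of C'] h by auto
      then show False using hull(4) disj by (auto simp: a_def b_def)
    qed
  next
    case False
    define x where "x = (max (a C) (a C') + min (b C) (b C')) / 2"
    have "max (a C) (a C') < min (b C) (b C')" using h False le by auto
    then have "x \<in> {a C<..<b C}" "x \<in> {a C'<..<b C'}" unfolding x_def by auto
    then have "x \<in> C" "x \<in> C'" using hull(4) hull(8) by (auto simp: a_def b_def)
    then show False using disj by blast
  qed
qed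

lemma continuous_image_interval_measure:
  fixes \<phi> :: "real \<Rightarrow> real"
  assumes "a \<le> b" "continuous_on {a..b} \<phi>"
  obtains x y where "x \<in> {a..b}" "y \<in> {a..b}" "\<phi> ` {a..b} \<in> lmeasurable"
    "measure lebesgue (\<phi> ` {a..b}) = \<bar>\<phi> y - \<phi> x\<bar>"
proof -
  obtain c d where cd: "\<phi> ` {a..b} = {c..d}" "c \<le> d"
    using continuous_image_closed_interval[OF assms] by blast
  then have "c \<in> \<phi> ` {a..b}" "d \<in> \<phi> ` {a..b}" by auto
  then obtain x y where xy: "x \<in> {a..b}" "\<phi> x = c" "y \<in> {a..b}" "\<phi> y = d" by blast
  show ?thesis
  proof (rule that[OF xy(1,3)])
    show "\<phi> ` {a..b} \<in> lmeasurable" "measure lebesgue (\<phi> ` {a..b}) = \<bar>\<phi> y - \<phi> x\<bar>"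
      using cd xy by auto
  qed
qed

lemma abs_cont_on_image_measure_sum_less:
  fixes \<phi> :: "real \<Rightarrow> real"
  assumes ac: "abs_cont_on {u..t} \<phi>" and e: "0 < e"
  obtains \<delta> where "0 < \<delta>"
    "\<And>I a b. finite I \<Longrightarrow> (\<And>i. i \<in> I \<Longrightarrow> u \<le> a i \<and> a i \<le> b i \<and> b i \<le> t) \<Longrightarrow>
       (\<And>i j. i \<in> I \<Longrightarrow> j \<in> I \<Longrightarrow> i \<noteq> j \<Longrightarrow> b i \<le> a j \<or> b j \<le> a i) \<Longrightarrow>
       (\<Sum>i\<in>I. b i - a i) < \<delta> \<Longrightarrow> (\<Sum>i\<in>I. measure lebesgue (\<phi> ` {a i..b i})) < e"
proof -
  obtain \<delta> where \<delta>: "0 < \<delta>"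
    and H: "\<And>(n::nat) U V. (\<forall>i<n. U i \<in> {u..t} \<and> V i \<in> {u..t} \<and> U i \<le> V i) \<Longrightarrow>
        (\<forall>i<n. \<forall>j<n. i \<noteq> j \<longrightarrow> V i \<le> U j \<or> V j \<le> U i) \<Longrightarrow> (\<Sum>i<n. V i - U i) < \<delta> \<Longrightarrow>
        (\<Sum>i<n. norm (\<phi> (V i) - \<phi> (U i))) < e"
    using abs_cont_onD[OF ac e] by blast
  have cont: "continuous_on {u..t} \<phi>" by (rule abs_cont_on_imp_continuous_on[OF ac])
  show ?thesis
  proof (rule that[OF \<delta>])
    fix I :: "'i set" and a b :: "'i \<Rightarrow> real"
    assume I: "finite I" and ab: "\<And>i. i \<in> I \<Longrightarrow> u \<le> a i \<and> a i \<le> b i \<and> b i \<le> t"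
      and disj: "\<And>i j. i \<in> I \<Longrightarrow> j \<in> I \<Longrightarrow> i \<noteq> j \<Longrightarrow> b i \<le> a j \<or> b j \<le> a i"
      and small: "(\<Sum>i\<in>I. b i - a i) < \<delta>"
    have "\<exists>p. fst p \<in> {a i..b i} \<and> snd p \<in> {a i..b i} \<and>
        measure lebesgue (\<phi> ` {a i..b i}) = \<bar>\<phi> (snd p) - \<phi> (fst p)\<bar>" if "i \<in> I" for i
    proof -
      have "a i \<le> b i" "continuous_on {a i..b i} \<phi>"
        using ab[OF that] by (auto intro: continuous_on_subset[OF cont])
      then obtain x y where "x \<in> {a i..b i}" "y \<in> {a i..b i}"
          "measure lebesgue (\<phi> ` {a i..b i}) = \<bar>\<phi> y - \<phi> x\<bar>"
        by (rule continuous_image_interval_measure)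
      then show ?thesis by (intro exI[of _ "(x, y)"]) simp
    qed
    then obtain p where p: "\<And>i. i \<in> I \<Longrightarrow> fst (p i) \<in> {a i..b i} \<and> snd (p i) \<in> {a i..b i} \<and>
        measure lebesgue (\<phi> ` {a i..b i}) = \<bar>\<phi> (snd (p i)) - \<phi> (fst (p i))\<bar>"
      using bchoice[of I] by (metis (no_types, lifting))
    define x where "x i = fst (p i)" for i
    define y where "y i = snd (p i)" for i
    have xy: "x i \<in> {a i..b i} \<and> y i \<in> {a i..b i} \<and>
        measure lebesgue (\<phi> ` {a i..b i}) = \<bar>\<phi> (y i) - \<phi> (x i)\<bar>" if "i \<in> I" for i
      using p[OF that] by (simp add: x_def y_def)
    obtain h where h: "bij_betw h {..<card I} I"
      using ex_bij_betw_nat_finite[OF I] by (auto simp: atLeast0LessThan)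
    define n where "n = card I"
    have hI: "i < n \<Longrightarrow> h i \<in> I" for i using h unfolding n_def bij_betw_def by auto
    have hinj: "i < n \<Longrightarrow> j < n \<Longrightarrow> i \<noteq> j \<Longrightarrow> h i \<noteq> h j" for i j
      using h unfolding n_def bij_betw_def inj_on_def by auto
    define U where "U k = min (x (h k)) (y (h k))" for k
    define V where "V k = max (x (h k)) (y (h k))" for k
    have UV: "a (h k) \<le> U k \<and> U k \<le> V k \<and> V k \<le> b (h k)" if "k < n" for k
      using xy[OF hI[OF that]] by (auto simp: U_def V_def)
    have sum_reindex: "(\<Sum>i\<in>I. f i) = (\<Sum>k<n. f (h k))" for f :: "'i \<Rightarrow> real"
      using sum.reindex_bij_betw[OF h, of f] by (simp add: n_def)
    have "(\<Sum>k<n. norm (\<phi> (V k) - \<phi> (U k))) < e"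
    proof (rule H)
      show "\<forall>k<n. U k \<in> {u..t} \<and> V k \<in> {u..t} \<and> U k \<le> V k"
      proof (intro allI impI)
        fix k assume "k < n"
        then show "U k \<in> {u..t} \<and> V k \<in> {u..t} \<and> U k \<le> V k" using UV ab[OF hI] by fastforce
      qed
      show "\<forall>k<n. \<forall>j<n. k \<noteq> j \<longrightarrow> V k \<le> U j \<or> V j \<le> U k"
      proof (intro allI impI)
        fix k j assume kj: "k < n" "j < n" "k \<noteq> j"
        then have "b (h k) \<le> a (h j) \<or> b (h j) \<le> a (h k)" using disj hI hinj by blast
        then show "V k \<le> U j \<or> V j \<le> U k" using UV[OF kj(1)] UV[OF kj(2)] by linarith
      qed
      have "(\<Sum>k<n. V k - U k) \<le> (\<Sum>k<n. b (h k) - a (h k))"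
        using UV by (intro sum_mono) (simp add: diff_mono)
      then show "(\<Sum>k<n. V k - U k) < \<delta>" using small sum_reindex[of "\<lambda>i. b i - a i"] by simp
    qed
    moreover have "measure lebesgue (\<phi> ` {a (h k)..b (h k)}) = norm (\<phi> (V k) - \<phi> (U k))"
      if "k < n" for k
    proof (cases "x (h k) \<le> y (h k)")
      case True
      then show ?thesis using xy[OF hI[OF that]] by (simp add: U_def V_def)
    next
      case False
      then show ?thesis using xy[OF hI[OF that]] by (simp add: U_def V_def abs_minus_commute)
    qed
    then have "(\<Sum>i\<in>I. measure lebesgue (\<phi> ` {a i..b i})) = (\<Sum>k<n. norm (\<phi> (V k) - \<phi> (U k)))"
      unfolding sum_reindex by simp
    ultimately show "(\<Sum>i\<in>I. measure lebesgue (\<phi> ` {a i..b i})) < e" by simp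
  qed
qed

text \<open>Lusin's property (N): cover \<open>N\<close> by an open set of small measure; its components
  meeting \<open>[u, t]\<close> give non-overlapping intervals of small total length, whose images
  have small total measure by absolute continuity.\<close>
lemma negligible_image_abs_cont:
  fixes \<phi> :: "real \<Rightarrow> real"
  assumes ac: "abs_cont_on {u..t} \<phi>" and N: "negligible N" and Nut: "N \<subseteq> {u..t}"
  shows "negligible (\<phi> ` N)"
  unfolding negligible_outer_le
proof (intro allI impI)
  fix e :: real assume e: "0 < e"
  obtain \<delta> where \<delta>: "0 < \<delta>"
    and small: "\<And>(I :: real set set) a b. finite I \<Longrightarrow> (\<And>i. i \<in> I \<Longrightarrow> u \<le> a i \<and> a i \<le> b i \<and> b i \<le> t) \<Longrightarrow>
       (\<And>i j. i \<in> I \<Longrightarrow> j \<in> I \<Longrightarrow> i \<noteq> j \<Longrightarrow> b i \<le> a j \<or> b j \<le> a i) \<Longrightarrow>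
       (\<Sum>i\<in>I. b i - a i) < \<delta> \<Longrightarrow> (\<Sum>i\<in>I. measure lebesgue (\<phi> ` {a i..b i})) < e"
    by (rule abs_cont_on_image_measure_sum_less[OF ac e]) (rule that, assumption, blast)
  obtain G where G: "open G" "N \<subseteq> G" "G \<in> lmeasurable" "measure lebesgue G < \<delta>"
    by (rule negligible_outer_open[OF N \<delta>])
  have cont: "continuous_on {u..t} \<phi>" by (rule abs_cont_on_imp_continuous_on[OF ac])
  define \<C> where "\<C> = {C \<in> components G. C \<inter> {u..t} \<noteq> {}}"
  define a where "a C = Inf (C \<inter> {u..t})" for C
  define b where "b C = Sup (C \<inter> {u..t})" for C
  have hull: "u \<le> a C \<and> a C \<le> b C \<and> b C \<le> t \<and> C \<inter> {u..t} \<subseteq> {a C..b C} \<and> {a C<..<b C} \<subseteq> C"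
    if "C \<in> \<C>" for C
  proof -
    have C: "C \<in> components G" "C \<inter> {u..t} \<noteq> {}" using that by (auto simp: \<C>_def)
    note h = component_Int_interval[OF C, folded a_def b_def]
    then have "a C \<le> b C" using C(2) by fastforce
    with h show ?thesis by blast
  qed
  have non_overlapping: "b C \<le> a C' \<or> b C' \<le> a C" if "C \<in> \<C>" "C' \<in> \<C>" "C \<noteq> C'" for C C'
    using components_Int_interval_non_overlapping[of C G u t C'] that by (simp add: \<C>_def a_def b_def)
  have img: "\<phi> ` {a C..b C} \<in> lmeasurable" if "C \<in> \<C>" for C
    using hull[OF that]
    by (intro lmeasurable_compact compact_continuous_image continuous_on_subset[OF cont]) auto
  have "\<phi> ` N \<subseteq> (\<Union>C\<in>\<C>. \<phi> ` {a C..b C})"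
  proof
    fix y assume "y \<in> \<phi> ` N"
    then obtain x where x: "x \<in> N" "y = \<phi> x" by auto
    then obtain C where C: "C \<in> components G" "x \<in> C" using G(2) Union_components[of G] by blast
    then have "C \<in> \<C>" using x Nut by (auto simp: \<C>_def)
    moreover have "x \<in> {a C..b C}" using hull[OF \<open>C \<in> \<C>\<close>] C x Nut by blast
    ultimately show "y \<in> (\<Union>C\<in>\<C>. \<phi> ` {a C..b C})" using x by blast
  qed
  moreover have "countable \<C>"
    using countable_subset[OF _ countable_components_open[OF G(1)]] by (auto simp: \<C>_def)
  moreover have "measure lebesgue (\<Union>C\<in>I. \<phi> ` {a C..b C}) \<le> e" if I: "I \<subseteq> \<C>" "finite I" for I
  proof -
    have "(\<Sum>C\<in>I. b C - a C) = measure lebesgue (\<Union>C\<in>I. {a C<..<b C})"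
    proof -
      have "pairwise (\<lambda>C C'. disjnt {a C<..<b C} {a C'<..<b C'}) I"
        unfolding pairwise_def disjnt_def using I(1) hull non_overlapping
        by (smt (verit, ccfv_threshold) disjoint_iff greaterThanLessThan_iff in_mono)
      then show ?thesis
        using I hull by (subst measure_UNION') (auto intro!: sum.cong)
    qed
    also have "\<dots> \<le> measure lebesgue G"
    proof (rule measure_mono_fmeasurable)
      show "(\<Union>C\<in>I. {a C<..<b C}) \<subseteq> G"
        using I(1) hull in_components_subset by (fastforce simp: \<C>_def)
    qed (use I(2) G(3) in auto)
    finally have lengths: "(\<Sum>C\<in>I. b C - a C) < \<delta>" using G(4) by simp
    have "(\<Sum>C\<in>I. measure lebesgue (\<phi> ` {a C..b C})) < e"
    proof (rule small[OF I(2) _ _ lengths])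
      show "\<And>C. C \<in> I \<Longrightarrow> u \<le> a C \<and> a C \<le> b C \<and> b C \<le> t" using I(1) hull by blast
      show "\<And>C C'. C \<in> I \<Longrightarrow> C' \<in> I \<Longrightarrow> C \<noteq> C' \<Longrightarrow> b C \<le> a C' \<or> b C' \<le> a C"
        using I(1) non_overlapping by blast
    qed
    moreover have "measure lebesgue (\<Union>C\<in>I. \<phi> ` {a C..b C}) \<le> (\<Sum>C\<in>I. measure lebesgue (\<phi> ` {a C..b C}))"
      using I img by (intro measure_UNION_le) auto
    ultimately show ?thesis by simp
  qed
  ultimately show "\<exists>T. \<phi> ` N \<subseteq> T \<and> T \<in> lmeasurable \<and> measure lebesgue T \<le> e"
    using fmeasurable_UN_bound[of \<C> "\<lambda>C. \<phi> ` {a C..b C}" lebesgue e]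
      measure_UN_bound[of \<C> "\<lambda>C. \<phi> ` {a C..b C}" lebesgue e] img by blast
qed

lemma abs_cont_on_compose_contraction:
  assumes "abs_cont_on S f" "T \<subseteq> S" "\<And>x y. norm (g x - g y) \<le> norm (f x - f y)"
  shows "abs_cont_on T g"
  unfolding abs_cont_on_def
proof (intro allI impI)
  fix e :: real assume e: "0 < e"
  obtain \<delta> where \<delta>: "0 < \<delta>"
    and H: "\<And>(n::nat) u v. (\<forall>i<n. u i \<in> S \<and> v i \<in> S \<and> u i \<le> v i) \<Longrightarrow>
       (\<forall>i<n. \<forall>j<n. i \<noteq> j \<longrightarrow> v i \<le> u j \<or> v j \<le> u i) \<Longrightarrow> (\<Sum>i<n. v i - u i) < \<delta> \<Longrightarrow>
       (\<Sum>i<n. norm (f (v i) - f (u i))) < e"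
    using abs_cont_onD[OF assms(1) e] by blast
  have bound: "(\<Sum>i<n. norm (g (v i) - g (u i))) < e"
    if "\<forall>i<n. u i \<in> T \<and> v i \<in> T \<and> u i \<le> v i" "\<forall>i<n. \<forall>j<n. i \<noteq> j \<longrightarrow> v i \<le> u j \<or> v j \<le> u i"
      "(\<Sum>i<n. v i - u i) < \<delta>" for n :: nat and u v
  proof -
    have "(\<Sum>i<n. norm (g (v i) - g (u i))) \<le> (\<Sum>i<n. norm (f (v i) - f (u i)))"
      by (intro sum_mono assms(3))
    also have "\<dots> < e" by (rule H) (use that assms(2) in auto)
    finally show ?thesis .
  qed
  show "\<exists>\<delta>>0. \<forall>(n::nat) u v. (\<forall>i<n. u i \<in> T \<and> v i \<in> T \<and> u i \<le> v i) \<and>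
        (\<forall>i<n. \<forall>j<n. i \<noteq> j \<longrightarrow> v i \<le> u j \<or> v j \<le> u i) \<and> (\<Sum>i<n. v i - u i) < \<delta> \<longrightarrow>
        (\<Sum>i<n. norm (g (v i) - g (u i))) < e"
    using \<delta> bound by (intro exI[of _ \<delta>]) auto
qed

lemma has_integral_vec1_comp:
  fixes G :: "real \<Rightarrow> real"
  assumes "(G has_integral I) S"
  shows "((\<lambda>y::real^1. G (y$1)) has_integral I) (vec ` S)"
proof -
  have "(((\<lambda>y::real^1. G (y$1)) \<circ> vec) has_integral I) ((\<lambda>x::real^1. x$1) ` (vec ` S))"
    using assms by (simp add: o_def image_image)
  then show ?thesis by (rule has_integral_vec1_D)
qed

lemma lmeasurable_vec_image:
  fixes A :: "real set"
  assumes "(vec ` A :: (real^1) set) \<in> lmeasurable"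
  shows "A \<in> lmeasurable" "measure lebesgue (vec ` A :: (real^1) set) = measure lebesgue A"
proof -
  have "((\<lambda>x::real^1. 1::real) has_integral measure lebesgue (vec ` A :: (real^1) set)) (vec ` A)"
    using assms lmeasure_integral[OF assms] lmeasurable_iff_integrable_on by (metis has_integral_integral)
  from has_integral_vec1_I[OF this]
  have "((\<lambda>x::real. 1::real) has_integral measure lebesgue (vec ` A :: (real^1) set)) A"
    by (simp add: o_def image_image)
  then show "A \<in> lmeasurable" "measure lebesgue (vec ` A :: (real^1) set) = measure lebesgue A"
    using lmeasurable_iff_integrable_on lmeasure_integral integral_unique by (metis integrable_on_def)+
qed

text \<open>The change-of-variables estimate of \<open>Change_Of_Vars\<close> is stated for
  maps between Euclidean spaces, so it is transported along \<open>vec :: real \<Rightarrow> real^1\<close>.\<close>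
lemma measure_image_le_integral:
  fixes \<phi> \<phi>' G :: "real \<Rightarrow> real"
  assumes S: "S \<in> sets lebesgue"
    and der: "\<And>x. x \<in> S \<Longrightarrow> (\<phi> has_real_derivative \<phi>' x) (at x within S)"
    and G: "G integrable_on S" and bnd: "\<And>x. x \<in> S \<Longrightarrow> \<bar>\<phi>' x\<bar> \<le> G x"
  shows "\<phi> ` S \<in> lmeasurable" "measure lebesgue (\<phi> ` S) \<le> integral S G"
proof -
  let ?S1 = "vec ` S :: (real^1) set"
  let ?\<Phi> = "\<lambda>y::real^1. (vec :: real \<Rightarrow> real^1) (\<phi> (y$1))"
  have det: "det (matrix ((*\<^sub>R) c) :: real^1^1) = c" for c
    by (simp add: matrix_def det_1 scaleR_vec_def)
  have S1: "?S1 \<in> sets lebesgue"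
    by (auto intro: differentiable_image_in_sets_lebesgue [OF S] differentiable_vec)
  have der1: "(?\<Phi> has_derivative (*\<^sub>R) (\<phi>' (y$1))) (at y within ?S1)" if y: "y \<in> ?S1" for y
  proof -
    obtain a where a: "a \<in> S" "y = vec a" using y by blast
    have "(\<lambda>x. x * \<phi>' a) = (*) (\<phi>' a)" by (simp add: fun_eq_iff mult.commute)
    then have "(\<phi> has_derivative (\<lambda>x. x * \<phi>' a)) (at a within S)"
      using der[OF a(1)] unfolding has_field_derivative_def by simp
    from has_derivative_vector_1[of \<phi> \<phi>' a S, OF this] show ?thesis using a by simp
  qed
  have G1: "((\<lambda>y::real^1. G (y$1)) has_integral integral S G) ?S1"
    by (rule has_integral_vec1_comp[OF integrable_integral[OF G]])
  have "(\<lambda>y. det (matrix ((*\<^sub>R) (\<phi>' (y$1))) :: real^1^1)) \<in> borel_measurable (lebesgue_on ?S1)"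
    by (rule borel_measurable_det_Jacobian[OF S1 der1])
  then have meas: "(\<lambda>y::real^1. \<bar>\<phi>' (y$1)\<bar>) \<in> borel_measurable (lebesgue_on ?S1)"
    by (simp add: det)
  have int1: "(\<lambda>y::real^1. \<bar>\<phi>' (y$1)\<bar>) integrable_on ?S1"
    by (rule measurable_bounded_by_integrable_imp_integrable_real[OF meas has_integral_integrable[OF G1] _ S1])
      (use bnd in auto)
  then have int1': "(\<lambda>y. \<bar>det (matrix ((*\<^sub>R) (\<phi>' (y$1))) :: real^1^1)\<bar>) integrable_on ?S1"
    by (simp add: det)
  have img: "?\<Phi> ` ?S1 = vec ` (\<phi> ` S)" by (auto simp: image_image)
  have L: "(vec ` (\<phi> ` S) :: (real^1) set) \<in> lmeasurable"
    using measurable_differentiable_image[OF S1 der1 int1'] img by simp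
  then show "\<phi> ` S \<in> lmeasurable" by (rule lmeasurable_vec_image)
  have "measure lebesgue (\<phi> ` S) = measure lebesgue (?\<Phi> ` ?S1)"
    using lmeasurable_vec_image(2)[OF L] img by simp
  also have "\<dots> \<le> integral ?S1 (\<lambda>y. \<bar>det (matrix ((*\<^sub>R) (\<phi>' (y$1))) :: real^1^1)\<bar>)"
    by (rule measure_differentiable_image[OF S1 der1 int1'])
  also have "\<dots> = integral ?S1 (\<lambda>y::real^1. \<bar>\<phi>' (y$1)\<bar>)" by (simp add: det)
  also have "\<dots> \<le> integral ?S1 (\<lambda>y::real^1. G (y$1))"
    by (rule integral_le[OF int1 has_integral_integrable[OF G1]]) (use bnd in auto)
  also have "\<dots> = integral S G" using G1 by (rule integral_unique)
  finally show "measure lebesgue (\<phi> ` S) \<le> integral S G" .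
qed

text \<open>Fundamental inequality of calculus for absolutely continuous functions with an
  a.e.\ derivative: by Lusin's property the values taken on the exceptional null set
  do not contribute to the measure of \<open>[\<phi> u, \<phi> t]\<close>.\<close>
lemma abs_cont_on_increment_le_integral:
  fixes \<phi> \<phi>' G :: "real \<Rightarrow> real"
  assumes ut: "u \<le> t" and ac: "abs_cont_on {u..t} \<phi>" and N: "negligible N"
    and der: "\<And>x. x \<in> {u..t} - N \<Longrightarrow> (\<phi> has_real_derivative \<phi>' x) (at x within {u..t})"
    and G: "G integrable_on {u..t}" and G0: "\<And>x. 0 \<le> G x"
    and bnd: "\<And>x. x \<in> {u..t} - N \<Longrightarrow> \<bar>\<phi>' x\<bar> \<le> G x"
  shows "\<phi> t - \<phi> u \<le> integral {u..t} G"
proof (cases "\<phi> t \<le> \<phi> u")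
  case True
  moreover have "0 \<le> integral {u..t} G" using G G0 by (rule integral_nonneg)
  ultimately show ?thesis by linarith
next
  case False
  have cont: "continuous_on {u..t} \<phi>" by (rule abs_cont_on_imp_continuous_on[OF ac])
  define S where "S = {u..t} - N"
  have SL: "S \<in> sets lebesgue" unfolding S_def using negligible_imp_sets[OF N] by auto
  have GS: "G integrable_on S"
  proof -
    have "G absolutely_integrable_on {u..t}" using G G0 by (rule nonnegative_absolutely_integrable_1)
    then have "set_integrable lebesgue S G" by (rule set_integrable_subset[OF _ SL]) (auto simp: S_def)
    then show ?thesis by (rule set_lebesgue_integral_eq_integral(1))
  qed
  have img: "\<phi> ` S \<in> lmeasurable" "measure lebesgue (\<phi> ` S) \<le> integral S G"
    by (rule measure_image_le_integral[OF SL _ GS];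
        use der bnd in \<open>auto simp: S_def intro: has_field_derivative_subset\<close>)+
  have null: "negligible (\<phi> ` (N \<inter> {u..t}))"
    by (rule negligible_image_abs_cont[OF ac negligible_subset[OF N]]) auto
  have cover: "{\<phi> u..\<phi> t} \<subseteq> \<phi> ` S \<union> \<phi> ` (N \<inter> {u..t})"
  proof
    fix y assume "y \<in> {\<phi> u..\<phi> t}"
    then have "\<phi> u \<le> y" "y \<le> \<phi> t" by auto
    then obtain x where "u \<le> x" "x \<le> t" "\<phi> x = y" using IVT'[OF _ _ ut cont] by blast
    then show "y \<in> \<phi> ` S \<union> \<phi> ` (N \<inter> {u..t})" by (cases "x \<in> N") (auto simp: S_def)
  qed
  have "\<phi> t - \<phi> u = measure lebesgue {\<phi> u..\<phi> t}" using False by simp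
  also have "\<dots> \<le> measure lebesgue (\<phi> ` S \<union> \<phi> ` (N \<inter> {u..t}))"
    using img(1) negligible_imp_measurable[OF null]
    by (intro measure_mono_fmeasurable[OF cover] fmeasurable.Un) auto
  also have "\<dots> \<le> measure lebesgue (\<phi> ` S) + measure lebesgue (\<phi> ` (N \<inter> {u..t}))"
    by (rule measure_Un_le) (use img negligible_imp_measurable[OF null] in \<open>auto dest: fmeasurableD\<close>)
  also have "\<dots> \<le> integral S G" using img(2) negligible_imp_measure0[OF null] by simp
  also have "\<dots> \<le> integral {u..t} G"
    by (rule integral_subset_le[OF _ GS G]) (auto simp: S_def G0)
  finally show ?thesis .
qed

definition Lp_controlled :: "ereal \<Rightarrow> (real \<Rightarrow> complex) \<Rightarrow> bool" where
  "Lp_controlled d f \<longleftrightarrow> (\<exists>g. (\<forall>x. 0 \<le> g x) \<and> Lp_loc d g \<and>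
     (\<forall>u t. 0 \<le> u \<and> u \<le> t \<longrightarrow> cmod (f t - f u) \<le> integral {u..t} g))"

lemma Lp_loc_imp_integrable_on:
  fixes g :: "real \<Rightarrow> real"
  assumes "1 \<le> d" "Lp_loc d g" "0 \<le> u"
  shows "g integrable_on {u..t}"
proof -
  have "Lp_on d {0..max t 1} g" using assms(2) by (simp add: Lp_loc_def)
  then show ?thesis by (rule Lp_on_imp_integrable_on[OF assms(1)]) (use assms(3) in auto)
qed

lemma ACd_imp_Lp_controlled:
  assumes d: "1 \<le> d" and A: "ACd d Y f"
  shows "Lp_controlled d f"
proof -
  obtain f' where f'L: "Lp_loc d f'"
    and AEd: "AE x in lebesgue_on {0..}. (f has_vector_derivative f' x) (at x within {0..})"
    and acT: "\<And>T. 0 < T \<Longrightarrow> abs_cont_on {0..T} f"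
    using A unfolding ACd_def by blast
  define g where "g x = cmod (f' x)" for x
  have gL: "Lp_loc d g" using f'L unfolding Lp_loc_def g_def by (auto intro: Lp_on_norm)
  have "AE x in lebesgue. x \<in> {0..} \<longrightarrow> (f has_vector_derivative f' x) (at x within {0..})"
    using AEd by (subst (asm) AE_restrict_space_iff) auto
  then obtain N where N: "negligible N"
    and derN: "\<And>x. x \<in> {0..} \<Longrightarrow> x \<notin> N \<Longrightarrow> (f has_vector_derivative f' x) (at x within {0..})"
    unfolding eventually_ae_filter_negligible by blast
  \<comment> \<open>Project onto the direction \<open>e\<close> of \<open>f t - f u\<close> to reduce to a real-valued function.\<close>
  have "cmod (f t - f u) \<le> integral {u..t} g" if ut: "0 \<le> u" "u \<le> t" for u t
  proof (cases "f t = f u")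
    case True
    have "g integrable_on {u..t}" by (rule Lp_loc_imp_integrable_on[OF d gL ut(1)])
    then show ?thesis using True by (simp add: integral_nonneg g_def)
  next
    case False
    define e where "e = (f t - f u) / complex_of_real (cmod (f t - f u))"
    have e1: "cmod e = 1" using False by (simp add: e_def norm_divide)
    define \<phi> where "\<phi> x = Re (cnj e * f x)" for x
    have ac: "abs_cont_on {u..t} \<phi>"
    proof (rule abs_cont_on_compose_contraction[OF acT[of "t + 1"]])
      fix x y
      have "norm (\<phi> x - \<phi> y) = \<bar>Re (cnj e * (f x - f y))\<bar>" by (simp add: \<phi>_def algebra_simps)
      also have "\<dots> \<le> cmod (cnj e * (f x - f y))" by (rule abs_Re_le_cmod)
      also have "\<dots> = norm (f x - f y)" using e1 by (simp add: norm_mult)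
      finally show "norm (\<phi> x - \<phi> y) \<le> norm (f x - f y)" .
    qed (use ut in auto)
    have der: "(\<phi> has_real_derivative Re (cnj e * f' x)) (at x within {u..t})" if x: "x \<in> {u..t} - N" for x
    proof -
      have "(f has_vector_derivative f' x) (at x within {0..})" using derN x ut by auto
      then have "((\<lambda>x. Re (cnj e * f x)) has_vector_derivative Re (cnj e * f' x)) (at x within {0..})"
        by (intro bounded_linear.has_vector_derivative[OF bounded_linear_Re] has_vector_derivative_mult_right)
      then have "(\<phi> has_real_derivative Re (cnj e * f' x)) (at x within {0..})"
        unfolding \<phi>_def has_real_derivative_iff_has_vector_derivative .
      then show ?thesis by (rule has_field_derivative_subset) (use ut in auto)
    qed
    have "\<bar>Re (cnj e * f' x)\<bar> \<le> g x" for x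
      using abs_Re_le_cmod[of "cnj e * f' x"] e1 by (simp add: norm_mult g_def)
    then have "\<phi> t - \<phi> u \<le> integral {u..t} g"
      using Lp_loc_imp_integrable_on[OF d gL ut(1)]
      by (intro abs_cont_on_increment_le_integral[OF ut(2) ac N der]) (auto simp: g_def)
    moreover have "\<phi> t - \<phi> u = cmod (f t - f u)"
    proof -
      have "cnj e * (f t - f u) = (f t - f u) * cnj (f t - f u) / complex_of_real (cmod (f t - f u))"
        by (simp add: e_def)
      also have "(f t - f u) * cnj (f t - f u) = complex_of_real ((cmod (f t - f u))\<^sup>2)"
        by (rule complex_norm_square[symmetric])
      finally have "cnj e * (f t - f u) = complex_of_real (cmod (f t - f u))"
        using False by (simp add: power2_eq_square)
      moreover have "\<phi> t - \<phi> u = Re (cnj e * (f t - f u))" by (simp add: \<phi>_def algebra_simps)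
      ultimately show ?thesis by simp
    qed
    ultimately show ?thesis by simp
  qed
  with gL show ?thesis unfolding Lp_controlled_def by (intro exI[of _ g]) (simp add: g_def)
qed

lemma Lp_controlled_sum_bound:
  assumes d: "1 \<le> d" and "Lp_controlled d f" "Lp_controlled d g"
  obtains K where "\<forall>x. 0 \<le> K x" "Lp_loc d K"
    "\<And>u t. 0 \<le> u \<Longrightarrow> u \<le> t \<Longrightarrow> cmod (f t - f u) + cmod (g t - g u) \<le> integral {u..t} K"
proof -
  obtain kf kg where kf: "\<forall>x. 0 \<le> kf x" "Lp_loc d kf"
      "\<forall>u t. 0 \<le> u \<and> u \<le> t \<longrightarrow> cmod (f t - f u) \<le> integral {u..t} kf"
    and kg: "\<forall>x. 0 \<le> kg x" "Lp_loc d kg"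
      "\<forall>u t. 0 \<le> u \<and> u \<le> t \<longrightarrow> cmod (g t - g u) \<le> integral {u..t} kg"
    using assms(2,3) unfolding Lp_controlled_def by blast
  show ?thesis
  proof (rule that[of "\<lambda>x. kf x + kg x"])
    show "\<forall>x. 0 \<le> kf x + kg x" using kf(1) kg(1) by simp
    show "Lp_loc d (\<lambda>x. kf x + kg x)"
      using kf(2) kg(2) unfolding Lp_loc_def by (auto intro: Lp_on_add[OF d])
    fix u t :: real assume ut: "0 \<le> u" "u \<le> t"
    have "integral {u..t} (\<lambda>x. kf x + kg x) = integral {u..t} kf + integral {u..t} kg"
      by (intro Henstock_Kurzweil_Integration.integral_add Lp_loc_imp_integrable_on[OF d] kf(2) kg(2) ut(1))
    then show "cmod (f t - f u) + cmod (g t - g u) \<le> integral {u..t} (\<lambda>x. kf x + kg x)"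
      using kf(3) kg(3) ut by fastforce
  qed
qed

lemma Lp_controlledI_sum_bound:
  assumes d: "1 \<le> d" and "Lp_controlled d f" "Lp_controlled d g"
    and "\<And>u t. 0 \<le> u \<Longrightarrow> u \<le> t \<Longrightarrow> cmod (h t - h u) \<le> cmod (f t - f u) + cmod (g t - g u)"
  shows "Lp_controlled d h"
proof -
  obtain K where "\<forall>x. 0 \<le> K x" "Lp_loc d K"
    "\<And>u t. 0 \<le> u \<Longrightarrow> u \<le> t \<Longrightarrow> cmod (f t - f u) + cmod (g t - g u) \<le> integral {u..t} K"
    using Lp_controlled_sum_bound[OF assms(1-3)] by blast
  with assms(4) show ?thesis unfolding Lp_controlled_def by (meson order_trans)
qed

lemma evolution_familyI:
  assumes "\<And>s t. 0 \<le> s \<Longrightarrow> s \<le> t \<Longrightarrow> \<phi> s t holomorphic_on unit_disk"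
    and "\<And>s t z. 0 \<le> s \<Longrightarrow> s \<le> t \<Longrightarrow> cmod z < 1 \<Longrightarrow> cmod (\<phi> s t z) < 1"
    and "\<And>s z. 0 \<le> s \<Longrightarrow> cmod z < 1 \<Longrightarrow> \<phi> s s z = z"
    and "\<And>s u t z. 0 \<le> s \<Longrightarrow> s \<le> u \<Longrightarrow> u \<le> t \<Longrightarrow> cmod z < 1 \<Longrightarrow> \<phi> s t z = \<phi> u t (\<phi> s u z)"
    and "\<And>z T. cmod z < 1 \<Longrightarrow> 0 < T \<Longrightarrow> \<exists>k::real \<Rightarrow> real. (\<forall>x. 0 \<le> k x) \<and> Lp_on d {0..T} k \<and>
           (\<forall>s u t. 0 \<le> s \<and> s \<le> u \<and> u \<le> t \<and> t \<le> T \<longrightarrow> norm (\<phi> s u z - \<phi> s t z) \<le> integral {u..t} k)"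
  shows "evolution_family d \<phi>"
  unfolding evolution_family_def
proof (intro conjI)
  show "\<forall>s t. 0 \<le> s \<and> s \<le> t \<longrightarrow> \<phi> s t holomorphic_on unit_disk \<and> \<phi> s t ` unit_disk \<subseteq> unit_disk"
    using assms(1,2) by auto
  show "\<forall>s\<ge>0. \<forall>z\<in>unit_disk. \<phi> s s z = z" using assms(3) by simp
  show "\<forall>s u t. 0 \<le> s \<and> s \<le> u \<and> u \<le> t \<longrightarrow> (\<forall>z\<in>unit_disk. \<phi> s t z = \<phi> u t (\<phi> s u z))"
    using assms(4) by simp
  show "\<forall>z\<in>unit_disk. \<forall>T>0. \<exists>k::real \<Rightarrow> real. (\<forall>x. 0 \<le> k x) \<and> Lp_on d {0..T} k \<and>
      (\<forall>s u t. 0 \<le> s \<and> s \<le> u \<and> u \<le> t \<and> t \<le> T \<longrightarrow> norm (\<phi> s u z - \<phi> s t z) \<le> integral {u..t} k)"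
    using assms(5) by simp
qed


lemma evolution_familyD:
  assumes "evolution_family d \<psi>"
  shows "\<And>s t. 0 \<le> s \<Longrightarrow> s \<le> t \<Longrightarrow> \<psi> s t holomorphic_on unit_disk"
    and "\<And>s t z. 0 \<le> s \<Longrightarrow> s \<le> t \<Longrightarrow> cmod z < 1 \<Longrightarrow> cmod (\<psi> s t z) < 1"
    and "\<And>s z. 0 \<le> s \<Longrightarrow> cmod z < 1 \<Longrightarrow> \<psi> s s z = z"
    and "\<And>s u t z. 0 \<le> s \<Longrightarrow> s \<le> u \<Longrightarrow> u \<le> t \<Longrightarrow> cmod z < 1 \<Longrightarrow> \<psi> s t z = \<psi> u t (\<psi> s u z)"
    and "\<And>z T. cmod z < 1 \<Longrightarrow> 0 < T \<Longrightarrow> \<exists>k::real \<Rightarrow> real. (\<forall>x. 0 \<le> k x) \<and> Lp_on d {0..T} k \<and>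
           (\<forall>s u t. 0 \<le> s \<and> s \<le> u \<and> u \<le> t \<and> t \<le> T \<longrightarrow> norm (\<psi> s u z - \<psi> s t z) \<le> integral {u..t} k)"
  using assms unfolding evolution_family_def by (auto simp: subset_iff)

lemma evolution_family_cong:
  assumes "evolution_family d \<phi>"
    and eq: "\<And>s t z. 0 \<le> s \<Longrightarrow> s \<le> t \<Longrightarrow> cmod z < 1 \<Longrightarrow> \<phi>' s t z = \<phi> s t z"
  shows "evolution_family d \<phi>'"
proof (rule evolution_familyI)
  note E = evolution_familyD[OF assms(1)]
  show "\<phi>' s t holomorphic_on unit_disk" if "0 \<le> s" "s \<le> t" for s t
    by (rule holomorphic_transform[OF E(1)[OF that]]) (use that eq in auto)
  show "cmod (\<phi>' s t z) < 1" if "0 \<le> s" "s \<le> t" "cmod z < 1" for s t z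
    using E(2)[OF that] eq[OF that] by simp
  show "\<phi>' s s z = z" if "0 \<le> s" "cmod z < 1" for s z
    using E(3)[OF that] eq[of s s z] that by simp
  show "\<phi>' s t z = \<phi>' u t (\<phi>' s u z)" if "0 \<le> s" "s \<le> u" "u \<le> t" "cmod z < 1" for s u t z
    using E(4)[OF that] E(2)[of s u z] eq[of s t z] eq[of s u z] eq[of u t "\<phi> s u z"] that by simp
  show "\<exists>k. (\<forall>x. 0 \<le> k x) \<and> Lp_on d {0..T} k \<and>
      (\<forall>s u t. 0 \<le> s \<and> s \<le> u \<and> u \<le> t \<and> t \<le> T \<longrightarrow> norm (\<phi>' s u z - \<phi>' s t z) \<le> integral {u..t} k)"
    if "cmod z < 1" "0 < T" for z T
    using E(5)[OF that] eq that by auto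
qed

lemma evolution_family_displacement_le:
  assumes EF: "evolution_family d \<psi>" and z: "cmod z < 1" and T: "0 < T"
  obtains k where "\<forall>x. 0 \<le> k x" "Lp_on d {0..T} k"
    "\<And>u t. 0 \<le> u \<Longrightarrow> u \<le> t \<Longrightarrow> t \<le> T \<Longrightarrow> cmod (\<psi> u t z - z) \<le> integral {u..t} k"
proof -
  obtain k where k: "\<forall>x. 0 \<le> k x" "Lp_on d {0..T} k"
    "\<forall>s u t. 0 \<le> s \<and> s \<le> u \<and> u \<le> t \<and> t \<le> T \<longrightarrow> norm (\<psi> s u z - \<psi> s t z) \<le> integral {u..t} k"
    using evolution_familyD(5)[OF EF z T] by blast
  have "cmod (\<psi> u t z - z) \<le> integral {u..t} k" if "0 \<le> u" "u \<le> t" "t \<le> T" for u t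
    using k(3) evolution_familyD(3)[OF EF that(1) z] that by (fastforce simp: norm_minus_commute)
  with k(1,2) show ?thesis using that by blast
qed

text \<open>Split \<open>[s, u]\<close> into steps on which \<open>\<psi>(0)\<close> stays in the disk of radius \<open>1/2\<close>; by
  Schwarz--Pick each step adds at most \<open>1/2\<close> to the radius in the sense of \<open>radius_add\<close>,
  and finitely many steps keep the radius below \<open>1\<close>.\<close>
lemma evolution_family_origin_bound:
  assumes d: "1 \<le> d" and EF: "evolution_family d \<psi>" and T: "0 < T"
  obtains R0 where "0 \<le> R0" "R0 < 1" "\<And>s u. 0 \<le> s \<Longrightarrow> s \<le> u \<Longrightarrow> u \<le> T \<Longrightarrow> cmod (\<psi> s u 0) \<le> R0"
proof -
  note E = evolution_familyD[OF EF]
  obtain k where k0: "\<forall>x. 0 \<le> k x" and kL: "Lp_on d {0..T} k"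
    and kb: "\<And>u t. 0 \<le> u \<Longrightarrow> u \<le> t \<Longrightarrow> t \<le> T \<Longrightarrow> cmod (\<psi> u t 0 - 0) \<le> integral {u..t} k"
    using evolution_family_displacement_le[OF EF _ T, of 0] by auto
  have kint: "k integrable_on {0..T}" using Lp_on_imp_integrable_on[OF d kL] by simp
  define F where "F x = integral {0..x} k" for x
  have "continuous_on {0..T} F" unfolding F_def by (rule indefinite_integral_continuous_1[OF kint])
  then have "uniformly_continuous_on {0..T} F" by (intro compact_uniformly_continuous) auto
  then obtain \<delta> where \<delta>: "0 < \<delta>"
    and ucF: "\<And>x y. x \<in> {0..T} \<Longrightarrow> y \<in> {0..T} \<Longrightarrow> dist y x < \<delta> \<Longrightarrow> dist (F y) (F x) < 1/2"
    unfolding uniformly_continuous_on_def by (metis divide_pos_pos zero_less_numeral zero_less_one)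
  have small: "cmod (\<psi> v u 0) \<le> 1/2" if "0 \<le> v" "v \<le> u" "u \<le> T" "u - v < \<delta>" for u v
  proof -
    have "k integrable_on {0..u}" using kint that by (intro integrable_subinterval_real[OF kint]) auto
    then have "integral {0..v} k + integral {v..u} k = integral {0..u} k"
      using that by (intro Henstock_Kurzweil_Integration.integral_combine) auto
    moreover have "dist (F u) (F v) < 1/2" using that by (intro ucF) (auto simp: dist_real_def)
    ultimately have "integral {v..u} k < 1/2" unfolding F_def dist_real_def by linarith
    then show ?thesis using kb[OF that(1-3)] by simp
  qed
  define r where "r n = (radius_add (1/2) ^^ n) 0" for n
  have r: "0 \<le> r n \<and> r n < 1" for n
    by (induction n) (simp_all add: r_def radius_add_bounds)
  define \<eta> where "\<eta> = \<delta> / 2"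
  have \<eta>: "0 < \<eta>" "\<eta> < \<delta>" using \<delta> by (simp_all add: \<eta>_def)
  have steps: "\<forall>s u. 0 \<le> s \<and> s \<le> u \<and> u \<le> T \<and> u - s < real n * \<eta> \<longrightarrow> cmod (\<psi> s u 0) \<le> r n" for n
  proof (induction n)
    case 0
    then show ?case by simp
  next
    case (Suc n)
    show ?case
    proof (intro allI impI)
      fix s u assume h: "0 \<le> s \<and> s \<le> u \<and> u \<le> T \<and> u - s < real (Suc n) * \<eta>"
      define v where "v = max s (u - \<eta>)"
      have v: "s \<le> v" "v \<le> u" "v - s < real n * \<eta> \<or> v = s" "u - v < \<delta>"
        using h \<eta> by (auto simp: v_def algebra_simps)
      have x: "cmod (\<psi> s v 0) \<le> r n"
        using Suc.IH v h E(3)[of s 0] r[of n] by (cases "v = s") auto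
      have xD: "cmod (\<psi> s v 0) < 1" using x r[of n] by simp
      have "\<psi> s u 0 = \<psi> v u (\<psi> s v 0)" using E(4)[of s v u 0] h v by auto
      also have "cmod \<dots> \<le> radius_add (cmod (\<psi> v u 0)) (cmod (\<psi> s v 0))"
        by (rule norm_self_map_le[OF E(1) E(2) xD]) (use h v in auto)
      also have "\<dots> \<le> radius_add (1/2) (r n)"
        using x small[of v u] v h r[of n] by (intro radius_add_mono) auto
      finally show "cmod (\<psi> s u 0) \<le> r (Suc n)" by (simp add: r_def)
    qed
  qed
  obtain n where n: "T < real n * \<eta>" using reals_Archimedean3[OF \<eta>(1)] by blast
  show ?thesis
  proof (rule that[of "r n"])
    show "0 \<le> r n" "r n < 1" using r[of n] by auto
    show "cmod (\<psi> s u 0) \<le> r n" if "0 \<le> s" "s \<le> u" "u \<le> T" for s u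
      using steps[of n] n that by auto
  qed
qed

definition moebius_conj ::
    "(real \<Rightarrow> complex) \<Rightarrow> (real \<Rightarrow> complex) \<Rightarrow> (real \<Rightarrow> real \<Rightarrow> complex \<Rightarrow> complex) \<Rightarrow> real \<Rightarrow> real \<Rightarrow> complex \<Rightarrow> complex" where
  "moebius_conj a b \<psi> s t = disk_moebius (a t) (b t) \<circ> \<psi> s t \<circ> disk_moebius (- (cnj (b s) * a s)) (cnj (b s))"

lemma disk_moebius_step_le:
  assumes "cmod \<zeta> < 1" "cmod \<eta> < 1" "cmod a \<le> A" "cmod a' \<le> A" "A < 1" "cmod b = 1" "cmod b' = 1"
  shows "cmod (disk_moebius a b \<zeta> - disk_moebius a' b' \<eta>)
           \<le> 2 / (1 - A) * cmod (\<zeta> - \<eta>) + 4 / (1 - A)\<^sup>2 * (cmod (a - a') + cmod (b - b'))"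
proof -
  have "cmod (disk_moebius a b \<zeta> - disk_moebius a b \<eta>) \<le> 2 / (1 - cmod a) * cmod (\<zeta> - \<eta>)"
    using assms by (intro disk_moebius_lipschitz) auto
  also have "\<dots> \<le> 2 / (1 - A) * cmod (\<zeta> - \<eta>)"
    using assms by (intro mult_right_mono divide_left_mono) auto
  finally have "cmod (disk_moebius a b \<zeta> - disk_moebius a b \<eta>) \<le> 2 / (1 - A) * cmod (\<zeta> - \<eta>)" .
  moreover have "cmod (disk_moebius a b \<eta> - disk_moebius a' b' \<eta>) \<le> 4 / (1 - A)\<^sup>2 * (cmod (a - a') + cmod (b - b'))"
    using assms by (intro disk_moebius_lipschitz_params) auto
  ultimately show ?thesis
    using norm_triangle_ineq[of "disk_moebius a b \<zeta> - disk_moebius a b \<eta>" "disk_moebius a b \<eta> - disk_moebius a' b' \<eta>"]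
    by simp
qed

text \<open>On \<open>[0, T]\<close> the parameters stay in a compact part of the disk, and so do the orbits
  \<open>\<psi>\<^sub>s\<^sub>,\<^sub>u(h\<^sub>s\<^sup>-\<^sup>1 z)\<close>; there the conjugating maps are Lipschitz and self-maps move points by
  at most a multiple of their displacement at \<open>0\<close> and \<open>1/2\<close>.\<close>
lemma moebius_conj_increment_le:
  assumes d: "1 \<le> d" and EF: "evolution_family d \<psi>"
    and aD: "\<And>t. 0 \<le> t \<Longrightarrow> cmod (a t) < 1" and bS: "\<And>t. 0 \<le> t \<Longrightarrow> cmod (b t) = 1"
    and ac: "continuous_on {0..T} a"
    and K: "\<forall>x. 0 \<le> K x" "Lp_loc d K"
      "\<And>u t. 0 \<le> u \<Longrightarrow> u \<le> t \<Longrightarrow> cmod (a t - a u) + cmod (b t - b u) \<le> integral {u..t} K"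
    and z: "cmod z < 1" and T: "0 < T"
  shows "\<exists>k. (\<forall>x. 0 \<le> k x) \<and> Lp_on d {0..T} k \<and>
           (\<forall>s u t. 0 \<le> s \<and> s \<le> u \<and> u \<le> t \<and> t \<le> T \<longrightarrow>
              norm (moebius_conj a b \<psi> s u z - moebius_conj a b \<psi> s t z) \<le> integral {u..t} k)"
proof -
  note E = evolution_familyD[OF EF]
  define H where "H s = disk_moebius (- (cnj (b s) * a s)) (cnj (b s))" for s
  obtain s0 where s0: "s0 \<in> {0..T}" and s0max: "\<And>s. s \<in> {0..T} \<Longrightarrow> cmod (a s) \<le> cmod (a s0)"
    using continuous_attains_sup[of "{0..T}" "\<lambda>s. cmod (a s)"] T continuous_on_norm[OF ac] by auto
  define A where "A = cmod (a s0)"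
  have A: "0 \<le> A" "A < 1" using aD s0 by (auto simp: A_def)
  have aA: "\<And>s. s \<in> {0..T} \<Longrightarrow> cmod (a s) \<le> A" using s0max by (simp add: A_def)
  define R1 where "R1 = radius_add A (cmod z)"
  have R1: "0 \<le> R1" "R1 < 1" using radius_add_bounds[of A "cmod z"] A z by (auto simp: R1_def)
  have HR1: "cmod (H s z) \<le> R1" if "s \<in> {0..T}" for s
  proof -
    have "cmod (H s z) \<le> radius_add (cmod (a s)) (cmod z)"
      using norm_disk_moebius_le[of "- (cnj (b s) * a s)" "cnj (b s)" z] aD bS that z
      by (simp add: H_def norm_mult)
    also have "\<dots> \<le> R1" unfolding R1_def using aA[OF that] A z by (intro radius_add_mono) auto
    finally show ?thesis .
  qed
  obtain R0 where R0: "0 \<le> R0" "R0 < 1"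
    and R0b: "\<And>s u. 0 \<le> s \<Longrightarrow> s \<le> u \<Longrightarrow> u \<le> T \<Longrightarrow> cmod (\<psi> s u 0) \<le> R0"
    using evolution_family_origin_bound[OF d EF T] by blast
  define R where "R = radius_add R0 R1"
  have R: "0 \<le> R" "R < 1" using radius_add_bounds[of R0 R1] R0 R1 by (auto simp: R_def)
  have orbit: "cmod (\<psi> s u (H s z)) \<le> R" if "0 \<le> s" "s \<le> u" "u \<le> T" for s u
  proof -
    have "cmod (\<psi> s u (H s z)) \<le> radius_add (cmod (\<psi> s u 0)) (cmod (H s z))"
      by (rule norm_self_map_le[OF E(1) E(2)]) (use that HR1[of s] R1 in auto)
    also have "\<dots> \<le> R" unfolding R_def
      using that R0b[OF that] R0 R1 HR1[of s] by (intro radius_add_mono) auto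
    finally show ?thesis .
  qed
  obtain C where C: "0 \<le> C"
    and disp: "\<And>f \<zeta>. f holomorphic_on ball 0 1 \<Longrightarrow> (\<And>z. cmod z < 1 \<Longrightarrow> cmod (f z) < 1) \<Longrightarrow> cmod \<zeta> \<le> R \<Longrightarrow>
        cmod (f \<zeta> - \<zeta>) \<le> C * (cmod (f 0) + cmod (f (1/2) - 1/2))"
    using self_map_displacement_le[OF R] by blast
  have half: "cmod (1/2 :: complex) < 1" by (simp add: norm_divide)
  obtain k0 where k0: "\<forall>x. 0 \<le> k0 x" "Lp_on d {0..T} k0"
    "\<And>u t. 0 \<le> u \<Longrightarrow> u \<le> t \<Longrightarrow> t \<le> T \<Longrightarrow> cmod (\<psi> u t 0 - 0) \<le> integral {u..t} k0"
    using evolution_family_displacement_le[OF EF _ T, of 0] by auto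
  obtain kc where kc: "\<forall>x. 0 \<le> kc x" "Lp_on d {0..T} kc"
    "\<And>u t. 0 \<le> u \<Longrightarrow> u \<le> t \<Longrightarrow> t \<le> T \<Longrightarrow> cmod (\<psi> u t (1/2) - 1/2) \<le> integral {u..t} kc"
    using evolution_family_displacement_le[OF EF half T] by blast
  define L where "L = 2 / (1 - A) * C"
  define P where "P = 4 / (1 - A)\<^sup>2"
  have L0: "0 \<le> L" and P0: "0 \<le> P" using A C by (simp_all add: L_def P_def)
  define k where "k x = L * (k0 x + kc x) + P * K x" for x
  have S: "{0..T} \<in> sets lebesgue" by simp
  show ?thesis
  proof (intro exI[of _ k] conjI allI impI)
    show "0 \<le> k x" for x using k0(1) kc(1) K(1) L0 P0 by (simp add: k_def)
    show "Lp_on d {0..T} k"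
      unfolding k_def using k0(2) kc(2) K(2) T
      by (intro Lp_on_add[OF d S] Lp_on_cmult[OF S]) (auto simp: Lp_loc_def)
    fix s u t :: real assume stu: "0 \<le> s \<and> s \<le> u \<and> u \<le> t \<and> t \<le> T"
    define \<zeta> where "\<zeta> = \<psi> s u (H s z)"
    define \<eta> where "\<eta> = \<psi> u t \<zeta>"
    have HD: "cmod (H s z) < 1" using HR1[of s] R1 stu by simp
    have \<zeta>R: "cmod \<zeta> \<le> R" unfolding \<zeta>_def using orbit stu by simp
    have \<zeta>D: "cmod \<zeta> < 1" using \<zeta>R R by simp
    have \<eta>D: "cmod \<eta> < 1" unfolding \<eta>_def using E(2) stu \<zeta>D by simp
    have "moebius_conj a b \<psi> s u z = disk_moebius (a u) (b u) \<zeta>"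
      by (simp add: moebius_conj_def \<zeta>_def H_def)
    moreover have "moebius_conj a b \<psi> s t z = disk_moebius (a t) (b t) \<eta>"
      using E(4)[of s u t "H s z"] stu HD by (simp add: moebius_conj_def \<eta>_def \<zeta>_def H_def)
    ultimately have "norm (moebius_conj a b \<psi> s u z - moebius_conj a b \<psi> s t z)
        = cmod (disk_moebius (a u) (b u) \<zeta> - disk_moebius (a t) (b t) \<eta>)" by simp
    also have "cmod (disk_moebius (a u) (b u) \<zeta> - disk_moebius (a t) (b t) \<eta>)
        \<le> 2 / (1 - A) * cmod (\<zeta> - \<eta>) + P * (cmod (a u - a t) + cmod (b u - b t))"
      unfolding P_def using stu \<zeta>D \<eta>D aA A bS by (intro disk_moebius_step_le) auto
    also have "\<dots> \<le> L * (integral {u..t} k0 + integral {u..t} kc) + P * integral {u..t} K"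
    proof -
      have "cmod (\<eta> - \<zeta>) \<le> C * (cmod (\<psi> u t 0) + cmod (\<psi> u t (1/2) - 1/2))"
        unfolding \<eta>_def by (rule disp[OF E(1) E(2) \<zeta>R]) (use stu in auto)
      also have "\<dots> \<le> C * (integral {u..t} k0 + integral {u..t} kc)"
        using k0(3)[of u t] kc(3)[of u t] stu C by (intro mult_left_mono add_mono) auto
      finally have "cmod (\<zeta> - \<eta>) \<le> C * (integral {u..t} k0 + integral {u..t} kc)"
        by (simp add: norm_minus_commute)
      moreover have "cmod (a u - a t) + cmod (b u - b t) \<le> integral {u..t} K"
        using K(3)[of u t] stu by (simp add: norm_minus_commute)
      ultimately show ?thesis
        using A P0 unfolding L_def mult.assoc by (intro add_mono mult_left_mono) auto
    qed
    also have "\<dots> = integral {u..t} k"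
    proof -
      have i: "k0 integrable_on {u..t}" "kc integrable_on {u..t}" "K integrable_on {u..t}"
        using Lp_on_imp_integrable_on[OF d k0(2)] Lp_on_imp_integrable_on[OF d kc(2)]
          Lp_loc_imp_integrable_on[OF d K(2)] stu by auto
      have "(\<lambda>x. L * (k0 x + kc x)) integrable_on {u..t}"
        by (rule integrable_on_mult_right[OF integrable_add[OF i(1,2)]])
      moreover have "(\<lambda>x. P * K x) integrable_on {u..t}" by (rule integrable_on_mult_right[OF i(3)])
      ultimately show ?thesis unfolding k_def
        by (simp add: Henstock_Kurzweil_Integration.integral_add i(1,2) mult.assoc)
    qed
    finally show "norm (moebius_conj a b \<psi> s u z - moebius_conj a b \<psi> s t z) \<le> integral {u..t} k" .
  qed
qed

lemma evolution_family_moebius_conj: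
  assumes d: "1 \<le> d" and EF: "evolution_family d \<psi>"
    and aD: "\<And>t. 0 \<le> t \<Longrightarrow> cmod (a t) < 1" and bS: "\<And>t. 0 \<le> t \<Longrightarrow> cmod (b t) = 1"
    and ac: "\<And>T. 0 < T \<Longrightarrow> continuous_on {0..T} a"
    and "Lp_controlled d a" "Lp_controlled d b"
  shows "evolution_family d (moebius_conj a b \<psi>)"
proof (rule evolution_familyI)
  note E = evolution_familyD[OF EF]
  define h where "h t = disk_moebius (a t) (b t)" for t
  define H where "H s = disk_moebius (- (cnj (b s) * a s)) (cnj (b s))" for s
  have \<phi>: "moebius_conj a b \<psi> s t = h t \<circ> \<psi> s t \<circ> H s" for s t
    by (simp add: moebius_conj_def h_def H_def)
  have HD: "cmod (H s z) < 1" and hD: "cmod (h s z) < 1" if "0 \<le> s" "cmod z < 1" for s z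
    using norm_disk_moebius_less_1[of "- (cnj (b s) * a s)" "cnj (b s)" z]
      norm_disk_moebius_less_1[of "a s" "b s" z] aD bS that by (simp_all add: H_def h_def norm_mult)
  show "moebius_conj a b \<psi> s t holomorphic_on unit_disk" if "0 \<le> s" "s \<le> t" for s t
    unfolding \<phi>
  proof (intro holomorphic_on_compose_gen[where t=unit_disk])
    show "H s holomorphic_on unit_disk" "h t holomorphic_on unit_disk"
      using holomorphic_on_disk_moebius[of "- (cnj (b s) * a s)" "cnj (b s)"]
        holomorphic_on_disk_moebius[of "a t" "b t"] aD bS that by (simp_all add: H_def h_def norm_mult)
  qed (use E(1,2) HD that in auto)
  show "cmod (moebius_conj a b \<psi> s t z) < 1" if "0 \<le> s" "s \<le> t" "cmod z < 1" for s t z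
    using hD E(2) HD that by (simp add: \<phi>)
  show "moebius_conj a b \<psi> s s z = z" if "0 \<le> s" "cmod z < 1" for s z
    using E(3) HD disk_moebius_inverse'[of "a s" "b s" z] aD bS that by (simp add: \<phi> h_def H_def)
  show "moebius_conj a b \<psi> s t z = moebius_conj a b \<psi> u t (moebius_conj a b \<psi> s u z)"
    if "0 \<le> s" "s \<le> u" "u \<le> t" "cmod z < 1" for s u t z
  proof -
    have "cmod (\<psi> s u (H s z)) < 1" using E(2) HD that by simp
    then have "H u (h u (\<psi> s u (H s z))) = \<psi> s u (H s z)"
      using disk_moebius_inverse[of "a u" "b u"] aD bS that by (simp add: h_def H_def)
    then show ?thesis using E(4)[of s u t "H s z"] HD that by (simp add: \<phi>)
  qed
  obtain K where K: "\<forall>x. 0 \<le> K x" "Lp_loc d K"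
    "\<And>u t. 0 \<le> u \<Longrightarrow> u \<le> t \<Longrightarrow> cmod (a t - a u) + cmod (b t - b u) \<le> integral {u..t} K"
    using Lp_controlled_sum_bound[OF d assms(6,7)] by blast
  show "\<exists>k. (\<forall>x. 0 \<le> k x) \<and> Lp_on d {0..T} k \<and>
      (\<forall>s u t. 0 \<le> s \<and> s \<le> u \<and> u \<le> t \<and> t \<le> T \<longrightarrow>
         norm (moebius_conj a b \<psi> s u z - moebius_conj a b \<psi> s t z) \<le> integral {u..t} k)"
    if "cmod z < 1" "0 < T" for z T
    by (rule moebius_conj_increment_le[OF d EF aD bS ac[OF that(2)] K that])
qed

text \<open>The inverse of \<open>disk_moebius a b\<close> is \<open>disk_moebius (- b\<^sup>* a) b\<^sup>*\<close>, and the new parameters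
  inherit the regularity of \<open>a\<close> and \<open>b\<close>.\<close>
lemma evolution_family_moebius_conj_inverse:
  assumes d: "1 \<le> d" and EF: "evolution_family d \<psi>"
    and aD: "\<And>t. 0 \<le> t \<Longrightarrow> cmod (a t) < 1" and bS: "\<And>t. 0 \<le> t \<Longrightarrow> cmod (b t) = 1"
    and ac: "\<And>T. 0 < T \<Longrightarrow> continuous_on {0..T} a" "\<And>T. 0 < T \<Longrightarrow> continuous_on {0..T} b"
    and La: "Lp_controlled d a" and Lb: "Lp_controlled d b"
  shows "evolution_family d (moebius_conj (\<lambda>t. - (cnj (b t) * a t)) (\<lambda>t. cnj (b t)) \<psi>)"
proof (rule evolution_family_moebius_conj[OF d EF])
  show "cmod (- (cnj (b t) * a t)) < 1" "cmod (cnj (b t)) = 1" if "0 \<le> t" for t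
    using aD bS that by (simp_all add: norm_mult)
  show "continuous_on {0..T} (\<lambda>t. - (cnj (b t) * a t))" if "0 < T" for T
    using ac[OF that] by (intro continuous_intros)
  show "Lp_controlled d (\<lambda>t. cnj (b t))"
    using Lb by (simp add: Lp_controlled_def flip: complex_cnj_diff)
  show "Lp_controlled d (\<lambda>t. - (cnj (b t) * a t))"
  proof (rule Lp_controlledI_sum_bound[OF d La Lb])
    fix u t :: real assume ut: "0 \<le> u" "u \<le> t"
    have "cmod (- (cnj (b t) * a t) - - (cnj (b u) * a u))
        = cmod (cnj (b t) * (a t - a u) + (cnj (b t) - cnj (b u)) * a u)"
      by (simp add: algebra_simps norm_minus_commute)
    also have "\<dots> \<le> cmod (cnj (b t) * (a t - a u)) + cmod ((cnj (b t) - cnj (b u)) * a u)"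
      by (rule norm_triangle_ineq)
    also have "cmod ((cnj (b t) - cnj (b u)) * a u) = cmod (b t - b u) * cmod (a u)"
      by (metis complex_cnj_diff complex_mod_cnj norm_mult)
    also have "\<dots> \<le> cmod (b t - b u)" using aD[of u] ut by (simp add: mult_left_le)
    finally show "cmod (- (cnj (b t) * a t) - - (cnj (b u) * a u)) \<le> cmod (a t - a u) + cmod (b t - b u)"
      using bS[of t] ut by (simp add: norm_mult)
  qed
qed

theorem lemma2p8:
  fixes d :: ereal
    and \<psi> :: "real \<Rightarrow> real \<Rightarrow> complex \<Rightarrow> complex"
    and a b :: "real \<Rightarrow> complex"
    and h :: "real \<Rightarrow> complex \<Rightarrow> complex"
  assumes "1 \<le> d"
    and "evolution_family d \<psi>"
    and "ACd d unit_disk a"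
    and "ACd d (sphere 0 1) b"
    and "\<And>t z. h t z = (b t * z + a t) / (1 + b t * cnj (a t) * z)"
  shows "evolution_family d (\<lambda>s t. h t \<circ> \<psi> s t \<circ> inv_into unit_disk (h s)) \<and>
         evolution_family d (\<lambda>s t. inv_into unit_disk (h t) \<circ> \<psi> s t \<circ> h s)"
proof
  note d = assms(1) and EF = assms(2)
  have h: "h t = disk_moebius (a t) (b t)" for t using assms(5) by (simp add: fun_eq_iff disk_moebius_def)
  have aD: "\<And>t. 0 \<le> t \<Longrightarrow> cmod (a t) < 1" and bS: "\<And>t. 0 \<le> t \<Longrightarrow> cmod (b t) = 1"
    using assms(3,4) by (simp_all add: ACd_def)
  have ac: "continuous_on {0..T} a" "continuous_on {0..T} b" if "0 < T" for T
    using assms(3,4) that by (auto simp: ACd_def intro: abs_cont_on_imp_continuous_on)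
  have La: "Lp_controlled d a" and Lb: "Lp_controlled d b"
    using ACd_imp_Lp_controlled[OF d] assms(3,4) by blast+
  have inv: "inv_into unit_disk (h t) z = disk_moebius (- (cnj (b t) * a t)) (cnj (b t)) z"
    if "0 \<le> t" "cmod z < 1" for t z
    using inv_into_disk_moebius aD bS that by (simp add: h)
  show "evolution_family d (\<lambda>s t. h t \<circ> \<psi> s t \<circ> inv_into unit_disk (h s))"
  proof (rule evolution_family_cong[OF evolution_family_moebius_conj[OF d EF aD bS ac(1) La Lb]])
    fix s t :: real and z assume st: "0 \<le> s" "s \<le> t" "cmod z < 1"
    show "(h t \<circ> \<psi> s t \<circ> inv_into unit_disk (h s)) z = moebius_conj a b \<psi> s t z"
      unfolding comp_def inv[OF st(1,3)] by (simp add: moebius_conj_def h)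
  qed
  show "evolution_family d (\<lambda>s t. inv_into unit_disk (h t) \<circ> \<psi> s t \<circ> h s)"
  proof (rule evolution_family_cong[OF evolution_family_moebius_conj_inverse[OF d EF aD bS ac La Lb]])
    fix s t :: real and z assume st: "0 \<le> s" "s \<le> t" "cmod z < 1"
    have "cmod (\<psi> s t (h s z)) < 1"
      using evolution_familyD(2)[OF EF] norm_disk_moebius_less_1 aD bS st by (simp add: h)
    moreover have a: "b s * (cnj (b s) * a s) = a s"
      using bS[OF st(1)] complex_norm_square[of "b s"] by (simp flip: mult.assoc)
    ultimately show "(inv_into unit_disk (h t) \<circ> \<psi> s t \<circ> h s) z
        = moebius_conj (\<lambda>t. - (cnj (b t) * a t)) (\<lambda>t. cnj (b t)) \<psi> s t z"
      using inv[of t] st by (simp add: moebius_conj_def h a)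
  qed
qed

end
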